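(* Let $L$ be a complete enriched graded Lie algebra such that $\dim(L/L^{(2)})_p<\infty$ for every $p$. Then (i) for every $p$ and every integer $k$ there is an index $\alpha$ such that the projection $(L/L^{(k)})_p\to(L_\alpha/L_\alpha^k)_p$ is an isomorphism; (ii) $L^k=L^{(k)}$ for all $k\ge1$, and so $L$ is pronilpotent.
   Context: A complete enriched Lie algebra is a graded Lie algebra $L=L_{\ge0}$ over $\mathbb Q$ with a directed family (under inclusion of kernels) of surjective morphisms $\rho_\alpha:L\to L_\alpha$ onto finite-dimensional nilpotent Lie algebras, $\bigcap\ker\rho_\alpha=0$, and $L\cong\varprojlim_\alpha L_\alpha$. $L^k$ is the span of iterated brackets of length $k$ (lower central series), and $L^{(k)}$ is the closure of $L^k$, i.e. $\varprojlim_\alpha\rho_\alpha(L^k)$. $L$ is pronilpotent if $L\to\varprojlim_nL/L^n$ is an isomorphism. *)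

theory Defs
  imports Complex_Main "HOL-Library.FuncSet"
begin

text \<open>A graded Lie algebra over the rationals, concentrated in degrees p \<ge> 0.
  The ambient type is a Q-vector space (scalar multiplication lsc); the Lie algebra
  itself is the span of the homogeneous components lgr p, whose sum is required to be
  direct.  lbr is the bracket.\<close>

record 'a glie =
  lsc :: "rat \<Rightarrow> 'a \<Rightarrow> 'a"
  lbr :: "'a \<Rightarrow> 'a \<Rightarrow> 'a"
  lgr :: "nat \<Rightarrow> 'a set"

definition car :: "('a::ab_group_add, 'm) glie_scheme \<Rightarrow> 'a set" where
  "car L = module.span (lsc L) (\<Union>p. lgr L p)"

definition graded_lie :: "('a::ab_group_add, 'm) glie_scheme \<Rightarrow> bool" where
  "graded_lie L \<longleftrightarrow>
     vector_space (lsc L) \<and>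
     (\<forall>p. module.subspace (lsc L) (lgr L p)) \<and>
     (\<forall>n (x::nat \<Rightarrow> 'a). (\<forall>p<n. x p \<in> lgr L p) \<and> (\<Sum>p<n. x p) = 0 \<longrightarrow> (\<forall>p<n. x p = 0)) \<and>
     (\<forall>x\<in>car L. \<forall>y\<in>car L. \<forall>z\<in>car L. \<forall>c.
        lbr L x y \<in> car L \<and>
        lbr L (x + y) z = lbr L x z + lbr L y z \<and>
        lbr L x (y + z) = lbr L x y + lbr L x z \<and>
        lbr L (lsc L c x) y = lsc L c (lbr L x y) \<and>
        lbr L x (lsc L c y) = lsc L c (lbr L x y)) \<and>
     (\<forall>p q. \<forall>x\<in>lgr L p. \<forall>y\<in>lgr L q. lbr L x y \<in> lgr L (p + q)) \<and>
     (\<forall>p q. \<forall>x\<in>lgr L p. \<forall>y\<in>lgr L q.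
        lbr L x y = - lsc L ((- 1) ^ (p * q)) (lbr L y x)) \<and>
     (\<forall>p q r. \<forall>x\<in>lgr L p. \<forall>y\<in>lgr L q. \<forall>z\<in>lgr L r.
        lbr L x (lbr L y z) = lbr L (lbr L x y) z + lsc L ((- 1) ^ (p * q)) (lbr L y (lbr L x z)))"

definition lie_hom :: "('a::ab_group_add, 'm) glie_scheme \<Rightarrow> ('b::ab_group_add, 'n) glie_scheme \<Rightarrow> ('a \<Rightarrow> 'b) \<Rightarrow> bool" where
  "lie_hom L M f \<longleftrightarrow>
     f ` car L \<subseteq> car M \<and>
     (\<forall>x\<in>car L. \<forall>y\<in>car L. f (x + y) = f x + f y \<and> f (lbr L x y) = lbr M (f x) (f y)) \<and>
     (\<forall>c. \<forall>x\<in>car L. f (lsc L c x) = lsc M c (f x)) \<and>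
     (\<forall>p. f ` lgr L p \<subseteq> lgr M p)"

definition hom_ker :: "('a::ab_group_add, 'm) glie_scheme \<Rightarrow> ('a \<Rightarrow> 'b::zero) \<Rightarrow> 'a set" where
  "hom_ker L f = {x \<in> car L. f x = 0}"

fun ibr :: "('a::ab_group_add, 'm) glie_scheme \<Rightarrow> nat \<Rightarrow> 'a set" where
  "ibr L 0 = car L"
| "ibr L (Suc 0) = car L"
| "ibr L (Suc (Suc k)) = {lbr L x y | x y. x \<in> car L \<and> y \<in> ibr L (Suc k)}"

definition lcs :: "('a::ab_group_add, 'm) glie_scheme \<Rightarrow> nat \<Rightarrow> 'a set" where
  "lcs L k = module.span (lsc L) (ibr L k)"

definition fin_dim :: "('a::ab_group_add, 'm) glie_scheme \<Rightarrow> bool" where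
  "fin_dim L \<longleftrightarrow> (\<exists>B. finite B \<and> B \<subseteq> car L \<and> module.span (lsc L) B = car L)"

definition nilpotent_lie :: "('a::ab_group_add, 'm) glie_scheme \<Rightarrow> bool" where
  "nilpotent_lie L \<longleftrightarrow> (\<exists>n. lcs L n = {0})"

text \<open>Compatible families of degree p in the inverse system (L_alpha), the transition
  maps L_beta \<rightarrow> L_alpha existing when ker rho_beta \<subseteq> ker rho_alpha.\<close>
definition compat_families ::
  "('a::ab_group_add, 'm) glie_scheme \<Rightarrow> 'i set \<Rightarrow> ('i \<Rightarrow> ('b::ab_group_add, 'n) glie_scheme)
     \<Rightarrow> ('i \<Rightarrow> 'a \<Rightarrow> 'b) \<Rightarrow> nat \<Rightarrow> ('i \<Rightarrow> 'b) set" where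
  "compat_families L A M \<rho> p =
     {y \<in> extensional A. (\<forall>\<alpha>\<in>A. y \<alpha> \<in> lgr (M \<alpha>) p) \<and>
        (\<forall>\<alpha>\<in>A. \<forall>\<beta>\<in>A. hom_ker L (\<rho> \<beta>) \<subseteq> hom_ker L (\<rho> \<alpha>) \<longrightarrow>
            (\<forall>x\<in>car L. \<rho> \<beta> x = y \<beta> \<longrightarrow> \<rho> \<alpha> x = y \<alpha>))}"

definition complete_enriched ::
  "('a::ab_group_add, 'm) glie_scheme \<Rightarrow> 'i set \<Rightarrow> ('i \<Rightarrow> ('b::ab_group_add, 'n) glie_scheme)
     \<Rightarrow> ('i \<Rightarrow> 'a \<Rightarrow> 'b) \<Rightarrow> bool" where
  "complete_enriched L A M \<rho> \<longleftrightarrow>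
     graded_lie L \<and> A \<noteq> {} \<and>
     (\<forall>\<alpha>\<in>A. graded_lie (M \<alpha>) \<and> lie_hom L (M \<alpha>) (\<rho> \<alpha>) \<and> \<rho> \<alpha> ` car L = car (M \<alpha>) \<and>
              fin_dim (M \<alpha>) \<and> nilpotent_lie (M \<alpha>)) \<and>
     (\<forall>\<alpha>\<in>A. \<forall>\<beta>\<in>A. \<exists>\<gamma>\<in>A. hom_ker L (\<rho> \<gamma>) \<subseteq> hom_ker L (\<rho> \<alpha>) \<inter> hom_ker L (\<rho> \<beta>)) \<and>
     (\<Inter>\<alpha>\<in>A. hom_ker L (\<rho> \<alpha>)) = {0} \<and>
     (\<forall>p. bij_betw (\<lambda>x. restrict (\<lambda>\<alpha>. \<rho> \<alpha> x) A) (lgr L p) (compat_families L A M \<rho> p))"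

text \<open>Closure L^(k) of L^k, i.e. lim_alpha rho_alpha(L^k), viewed inside L \<cong> lim L_alpha.\<close>
definition lcs_closure ::
  "('a::ab_group_add, 'm) glie_scheme \<Rightarrow> 'i set \<Rightarrow> ('i \<Rightarrow> 'a \<Rightarrow> 'b) \<Rightarrow> nat \<Rightarrow> 'a set" where
  "lcs_closure L A \<rho> k = {x \<in> car L. \<forall>\<alpha>\<in>A. \<rho> \<alpha> x \<in> \<rho> \<alpha> ` lcs L k}"

definition coset :: "'a::plus \<Rightarrow> 'a set \<Rightarrow> 'a set" where
  "coset x W = (\<lambda>w. x + w) ` W"

definition quot :: "'a::plus set \<Rightarrow> 'a set \<Rightarrow> 'a set set" where
  "quot V W = (\<lambda>x. coset x W) ` V"

definition fin_dim_quot :: "(rat \<Rightarrow> 'a::ab_group_add \<Rightarrow> 'a) \<Rightarrow> 'a set \<Rightarrow> 'a set \<Rightarrow> bool" where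
  "fin_dim_quot s V W \<longleftrightarrow> (\<exists>F. finite F \<and> F \<subseteq> V \<and> V \<subseteq> module.span s (F \<union> W))"

text \<open>Pronilpotent: L \<rightarrow> lim_n L/L^n is an isomorphism (limit of graded spaces, taken degreewise).\<close>
definition pronilpotent :: "('a::ab_group_add, 'm) glie_scheme \<Rightarrow> bool" where
  "pronilpotent L \<longleftrightarrow>
     (\<forall>p. bij_betw (\<lambda>x. \<lambda>n. coset x (lcs L n \<inter> lgr L p)) (lgr L p)
          {c. \<forall>n. c n \<in> quot (lgr L p) (lcs L n \<inter> lgr L p) \<and> c (Suc n) \<subseteq> c n})"

end

theory Submission
  imports Defs "HOL-Library.Function_Algebras"
begin

text \<open>
  Finitely many homogeneous elements per degree
  generate L modulo L^(2), so their images generate every nilpotent quotient L_\<alpha>, and there an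
  element of L_\<alpha>^(k+2) in degree p is a sum of brackets of the generators with elements of
  L_\<alpha>^(k+1). To solve the same bracket equation in L we use linear compactness: the solution
  sets modulo the various kernels of \<rho>_\<alpha> are nonempty affine, saturated and directed, each
  \<rho>_\<alpha> has finite-dimensional image, and completeness (L is the limit of the L_\<alpha>) lets
  pairwise compatible values be realised by one element; a Zorn argument on families with the
  finite intersection property then produces a common solution.

  For (i), iterating brackets with the generators gives a finite set G spanning L_p modulo L^k in
  every L_\<alpha>; an index minimising the dimension of the preimage of L_\<alpha>^k inside span G
  already cuts out L^(k) in degree p. Pronilpotency follows because a Cauchy sequence for the
  lower central filtration is eventually constant in each nilpotent L_\<alpha>, and the eventual
  values form a compatible family.
\<close>

section \<open>Graded Lie algebras\<close>

lemma sum_lessThan_zero_tail: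
  fixes f :: "nat \<Rightarrow> 'b::comm_monoid_add"
  assumes "\<forall>q\<ge>n. f q = 0" "n \<le> N"
  shows "(\<Sum>q<N. f q) = (\<Sum>q<n. f q)"
  by (rule sum.mono_neutral_right) (use assms in auto)

locale graded_lie_algebra =
  fixes L :: "('a::ab_group_add, 'm) glie_scheme"
  assumes graded_lie: "graded_lie L"

sublocale graded_lie_algebra \<subseteq> V: vector_space "lsc L"
  using graded_lie unfolding graded_lie_def by (elim conjE)

context graded_lie_algebra
begin

lemma subspace_lgr: "V.subspace (lgr L p)"
proof -
  have "\<forall>p. V.subspace (lgr L p)"
    using graded_lie unfolding graded_lie_def by (elim conjE)
  then show ?thesis ..
qed

lemma lgr_direct:
  assumes "\<forall>q<n. x q \<in> lgr L q" "(\<Sum>q<n. x q) = 0" "p < n"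
  shows "x p = 0"
proof -
  have "\<forall>n (x::nat \<Rightarrow> 'a). (\<forall>q<n. x q \<in> lgr L q) \<and> (\<Sum>q<n. x q) = 0 \<longrightarrow> (\<forall>q<n. x q = 0)"
    using graded_lie unfolding graded_lie_def by (elim conjE)
  then show ?thesis using assms by blast
qed

lemma bracket_bilinear:
  assumes "x \<in> car L" "y \<in> car L" "z \<in> car L"
  shows "lbr L x y \<in> car L"
    and "lbr L (x + y) z = lbr L x z + lbr L y z"
    and "lbr L x (y + z) = lbr L x y + lbr L x z"
    and "lbr L (lsc L c x) y = lsc L c (lbr L x y)"
    and "lbr L x (lsc L c y) = lsc L c (lbr L x y)"
proof -
  have "\<forall>x\<in>car L. \<forall>y\<in>car L. \<forall>z\<in>car L. \<forall>c.
        lbr L x y \<in> car L \<and>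
        lbr L (x + y) z = lbr L x z + lbr L y z \<and>
        lbr L x (y + z) = lbr L x y + lbr L x z \<and>
        lbr L (lsc L c x) y = lsc L c (lbr L x y) \<and>
        lbr L x (lsc L c y) = lsc L c (lbr L x y)"
    using graded_lie unfolding graded_lie_def by (elim conjE)
  then show "lbr L x y \<in> car L" "lbr L (x + y) z = lbr L x z + lbr L y z"
    "lbr L x (y + z) = lbr L x y + lbr L x z" "lbr L (lsc L c x) y = lsc L c (lbr L x y)"
    "lbr L x (lsc L c y) = lsc L c (lbr L x y)"
    using assms by blast+
qed

lemma bracket_lgr: "\<lbrakk>x \<in> lgr L p; y \<in> lgr L q\<rbrakk> \<Longrightarrow> lbr L x y \<in> lgr L (p + q)"
proof -
  have "\<forall>p q. \<forall>x\<in>lgr L p. \<forall>y\<in>lgr L q. lbr L x y \<in> lgr L (p + q)"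
    using graded_lie unfolding graded_lie_def by (elim conjE)
  then show "\<lbrakk>x \<in> lgr L p; y \<in> lgr L q\<rbrakk> \<Longrightarrow> lbr L x y \<in> lgr L (p + q)" by blast
qed

lemma jacobi:
  assumes "x \<in> lgr L p" "y \<in> lgr L q" "z \<in> lgr L r"
  shows "lbr L x (lbr L y z) = lbr L (lbr L x y) z + lsc L ((- 1) ^ (p * q)) (lbr L y (lbr L x z))"
proof -
  have "\<forall>p q r. \<forall>x\<in>lgr L p. \<forall>y\<in>lgr L q. \<forall>z\<in>lgr L r.
        lbr L x (lbr L y z) = lbr L (lbr L x y) z + lsc L ((- 1) ^ (p * q)) (lbr L y (lbr L x z))"
    using graded_lie unfolding graded_lie_def by (elim conjE)
  then show ?thesis using assms by blast
qed

lemma subspace_car: "V.subspace (car L)"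
  unfolding car_def by simp

lemma lgr_subset_car: "lgr L p \<subseteq> car L"
  unfolding car_def by (meson UN_I V.span_superset iso_tuple_UNIV_I subset_iff)

lemma zero_in_car[simp]: "0 \<in> car L"
  using V.subspace_0 subspace_car by blast

lemma zero_in_lgr[simp]: "0 \<in> lgr L p"
  using V.subspace_0 subspace_lgr by blast

lemma car_add: "x \<in> car L \<Longrightarrow> y \<in> car L \<Longrightarrow> x + y \<in> car L"
  using V.subspace_add subspace_car by blast

lemma car_diff: "x \<in> car L \<Longrightarrow> y \<in> car L \<Longrightarrow> x - y \<in> car L"
  using V.subspace_diff subspace_car by blast

lemma car_scale: "x \<in> car L \<Longrightarrow> lsc L c x \<in> car L"
  using V.subspace_scale subspace_car by blast

lemma span_subset_car: "S \<subseteq> car L \<Longrightarrow> V.span S \<subseteq> car L"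
  using V.span_minimal subspace_car by blast

lemma bracket_closed: "x \<in> car L \<Longrightarrow> y \<in> car L \<Longrightarrow> lbr L x y \<in> car L"
  using bracket_bilinear zero_in_car by blast

lemma bracket_zero_left[simp]: "y \<in> car L \<Longrightarrow> lbr L 0 y = 0"
proof -
  assume y: "y \<in> car L"
  have "lbr L (0 + 0) y = lbr L 0 y + lbr L 0 y" using bracket_bilinear(2)[OF zero_in_car zero_in_car y] .
  then show ?thesis by simp
qed

lemma bracket_zero_right[simp]: "x \<in> car L \<Longrightarrow> lbr L x 0 = 0"
proof -
  assume y: "x \<in> car L"
  have "lbr L x (0 + 0) = lbr L x 0 + lbr L x 0" using bracket_bilinear(3)[OF y zero_in_car zero_in_car] .
  then show ?thesis by simp
qed

lemma bracket_add_left: "x \<in> car L \<Longrightarrow> y \<in> car L \<Longrightarrow> z \<in> car L \<Longrightarrow> lbr L (x + y) z = lbr L x z + lbr L y z"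
  using bracket_bilinear zero_in_car by blast

lemma bracket_add_right: "x \<in> car L \<Longrightarrow> y \<in> car L \<Longrightarrow> z \<in> car L \<Longrightarrow> lbr L x (y + z) = lbr L x y + lbr L x z"
  using bracket_bilinear zero_in_car by blast

lemma bracket_scale_left: "x \<in> car L \<Longrightarrow> y \<in> car L \<Longrightarrow> lbr L (lsc L c x) y = lsc L c (lbr L x y)"
  by (rule bracket_bilinear(4)[OF _ _ zero_in_car])

lemma bracket_scale_right: "x \<in> car L \<Longrightarrow> y \<in> car L \<Longrightarrow> lbr L x (lsc L c y) = lsc L c (lbr L x y)"
  by (rule bracket_bilinear(5)[OF _ _ zero_in_car])

lemma bracket_span_left:
  assumes S: "S \<subseteq> car L" and y: "y \<in> car L" and x: "x \<in> V.span S"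
  shows "lbr L x y \<in> V.span {lbr L a y | a. a \<in> S}"
proof -
  have "x \<in> car L \<and> lbr L x y \<in> V.span {lbr L a y | a. a \<in> S}"
    using x
  proof (induction rule: V.span_induct_alt)
    case base then show ?case using y by (simp add: V.span_zero)
  next
    case (step c a z)
    have a: "a \<in> car L" using step S by auto
    have "lbr L (lsc L c a + z) y = lsc L c (lbr L a y) + lbr L z y"
      using a step y by (simp add: bracket_add_left car_scale bracket_scale_left)
    moreover have "lbr L a y \<in> V.span {lbr L a y | a. a \<in> S}" using step by (auto intro: V.span_base)
    ultimately show ?case using step a
      by (auto intro!: V.span_add V.span_scale car_add car_scale)
  qed
  then show ?thesis by blast
qed

lemma bracket_span_right:
  assumes S: "S \<subseteq> car L" and x: "x \<in> car L" and y: "y \<in> V.span S"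
  shows "lbr L x y \<in> V.span {lbr L x a | a. a \<in> S}"
proof -
  have "y \<in> car L \<and> lbr L x y \<in> V.span {lbr L x a | a. a \<in> S}"
    using y
  proof (induction rule: V.span_induct_alt)
    case base then show ?case using x by (simp add: V.span_zero)
  next
    case (step c a z)
    have a: "a \<in> car L" using step S by auto
    have "lbr L x (lsc L c a + z) = lsc L c (lbr L x a) + lbr L x z"
      using a step x by (simp add: bracket_add_right car_scale bracket_scale_right)
    moreover have "lbr L x a \<in> V.span {lbr L x a | a. a \<in> S}" using step by (auto intro: V.span_base)
    ultimately show ?case using step a
      by (auto intro!: V.span_add V.span_scale car_add car_scale)
  qed
  then show ?thesis by blast
qed

lemma bracket_span:
  assumes S: "S \<subseteq> car L" and T: "T \<subseteq> car L" and x: "x \<in> V.span S" and y: "y \<in> V.span T"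
  shows "lbr L x y \<in> V.span {lbr L a b | a b. a \<in> S \<and> b \<in> T}"
proof -
  have yc: "y \<in> car L" using span_subset_car[OF T] y by auto
  have left: "lbr L x y \<in> V.span {lbr L a y | a. a \<in> S}" by (rule bracket_span_left[OF S yc x])
  have "{lbr L a y | a. a \<in> S} \<subseteq> V.span {lbr L a b | a b. a \<in> S \<and> b \<in> T}"
  proof
    fix z assume "z \<in> {lbr L a y | a. a \<in> S}"
    then obtain a where a: "a \<in> S" "z = lbr L a y" by auto
    have "lbr L a y \<in> V.span {lbr L a b | b. b \<in> T}" using bracket_span_right[OF T _ y] a S by auto
    moreover have "{lbr L a b | b. b \<in> T} \<subseteq> {lbr L a b | a b. a \<in> S \<and> b \<in> T}" using a by auto
    ultimately show "z \<in> V.span {lbr L a b | a b. a \<in> S \<and> b \<in> T}" using a V.span_mono by blast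
  qed
  then show ?thesis using left V.span_minimal V.subspace_span by blast
qed

abbreviation homogeneous where "homogeneous \<equiv> (\<Union>p. lgr L p)"

lemma homogeneous_subset_car: "homogeneous \<subseteq> car L" using lgr_subset_car by blast

lemma span_homogeneous_decomposition:
  assumes H: "H \<subseteq> homogeneous" and x: "x \<in> V.span H"
  shows "\<exists>n xs. (\<forall>q. xs q \<in> V.span (H \<inter> lgr L q)) \<and> (\<forall>q\<ge>n. xs q = 0) \<and> x = (\<Sum>q<n. xs q)"
  using x
proof (induction rule: V.span_induct_alt)
  case base
  show ?case by (rule exI[of _ 0], rule exI[of _ "\<lambda>q. 0"]) (simp add: V.span_zero)
next
  case (step c h y)
  then obtain n xs where IH: "\<forall>q. xs q \<in> V.span (H \<inter> lgr L q)" "\<forall>q\<ge>n. xs q = 0" "y = (\<Sum>q<n. xs q)"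
    by blast
  from step(1) H obtain q0 where q0: "h \<in> lgr L q0" by blast
  define xs' where "xs' = (\<lambda>q. xs q + (if q = q0 then lsc L c h else 0))"
  define n' where "n' = max n (Suc q0)"
  have xs'_span: "\<forall>q. xs' q \<in> V.span (H \<inter> lgr L q)"
  proof
    fix q
    have "lsc L c h \<in> V.span (H \<inter> lgr L q0)" using step(1) q0 by (intro V.span_scale V.span_base) auto
    then show "xs' q \<in> V.span (H \<inter> lgr L q)" unfolding xs'_def using IH(1)
      by (auto intro!: V.span_add simp: V.span_zero)
  qed
  have xs'_vanish: "\<forall>q\<ge>n'. xs' q = 0" using IH(2) unfolding xs'_def n'_def by auto
  have "(\<Sum>q<n'. xs' q) = (\<Sum>q<n'. xs q) + (\<Sum>q<n'. (if q = q0 then lsc L c h else 0))"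
    unfolding xs'_def by (simp add: sum.distrib)
  also have "(\<Sum>q<n'. xs q) = (\<Sum>q<n. xs q)" using IH(2) by (intro sum_lessThan_zero_tail) (auto simp: n'_def)
  also have "(\<Sum>q<n'. (if q = q0 then lsc L c h else 0)) = lsc L c h"
    by (simp add: n'_def less_max_iff_disj)
  finally have "(\<Sum>q<n'. xs' q) = lsc L c h + y" using IH(3) by (simp add: add.commute)
  then show ?case using xs'_span xs'_vanish by metis
qed

lemma homogeneous_components_unique:
  assumes "\<forall>q<n. a q \<in> lgr L q" "\<forall>q<n. b q \<in> lgr L q" "(\<Sum>q<n. a q) = (\<Sum>q<n. b q)" "q < n"
  shows "a q = b q"
proof -
  have "(\<lambda>q. a q - b q) q = 0"
  proof (rule lgr_direct[where n=n])
    show "\<forall>p<n. a p - b p \<in> lgr L p" using assms(1,2) by (auto intro: V.subspace_diff[OF subspace_lgr])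
    show "(\<Sum>p<n. a p - b p) = 0" using assms(3) by (simp add: sum_subtractf)
  qed (use assms in auto)
  then show ?thesis by simp
qed

lemma span_homogeneous_lgr:
  assumes H: "H \<subseteq> homogeneous" and x: "x \<in> V.span H" and xp: "x \<in> lgr L p"
  shows "x \<in> V.span (H \<inter> lgr L p)"
proof -
  obtain n xs where d: "\<forall>q. xs q \<in> V.span (H \<inter> lgr L q)" "\<forall>q\<ge>n. xs q = 0" "x = (\<Sum>q<n. xs q)"
    using span_homogeneous_decomposition[OF H x] by blast
  define N where "N = max n (Suc p)"
  have sg: "xs q \<in> lgr L q" for q
  proof -
    have "V.span (H \<inter> lgr L q) \<subseteq> lgr L q" by (rule V.span_minimal[OF _ subspace_lgr]) auto
    then show ?thesis using d(1) by blast
  qed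
  have s1: "(\<Sum>q<N. xs q) = x" using d by (subst sum_lessThan_zero_tail[of n]) (auto simp: N_def)
  have s2: "(\<Sum>q<N. (if q = p then x else 0)) = x" by (simp add: N_def less_max_iff_disj)
  have "xs p = (\<lambda>q. if q = p then x else 0) p"
  proof (rule homogeneous_components_unique[where n=N and a=xs and b="\<lambda>q. if q = p then x else 0" and q=p])
    show "\<forall>q<N. (if q = p then x else 0) \<in> lgr L q" using xp by auto
    show "(\<Sum>q<N. xs q) = (\<Sum>q<N. (if q = p then x else 0))" using s1 s2 by simp
  qed (use sg in \<open>auto simp: N_def\<close>)
  then have "xs p = x" by simp
  then show ?thesis using d(1) by metis
qed

lemma lgr_inter_zero:
  assumes "x \<in> lgr L p" "x \<in> lgr L q" "p \<noteq> q"
  shows "x = 0"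
proof -
  define N where "N = Suc (max p q)"
  have e: "(\<Sum>i<N. (if i = p then x else 0)) = (\<Sum>i<N. (if i = q then x else 0))" by (simp add: N_def)
  have "(\<lambda>i. if i = p then x else 0) p = (\<lambda>i. if i = q then x else 0) p"
    by (rule homogeneous_components_unique[where n=N and a="\<lambda>i. if i = p then x else 0" and b="\<lambda>i. if i = q then x else 0" and q=p])
       (use assms e in \<open>auto simp: N_def\<close>)
  then show ?thesis using assms by simp
qed

lemma car_span_homogeneous: "car L = V.span homogeneous" unfolding car_def by simp

lemma ibr_subset_car: "ibr L k \<subseteq> car L"
proof -
  have "ibr L (Suc k) \<subseteq> car L" for k
  proof (induction k)
    case 0 then show ?case by simp
  next
    case (Suc k) then show ?case using bracket_closed by auto
  qed
  then show ?thesis by (cases k) auto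
qed

lemma lcs_subset_car: "lcs L k \<subseteq> car L"
  unfolding lcs_def using span_subset_car[OF ibr_subset_car] .

lemma subspace_lcs: "V.subspace (lcs L k)" unfolding lcs_def by simp

lemma lcs_0: "lcs L 0 = car L" unfolding lcs_def using subspace_car by simp

lemma lcs_1: "lcs L (Suc 0) = car L" unfolding lcs_def using subspace_car by simp

lemma ibr_Suc_subset: "ibr L (Suc k) \<subseteq> ibr L k"
proof -
  have "ibr L (Suc (Suc k)) \<subseteq> ibr L (Suc k)" for k
  proof (induction k)
    case 0 then show ?case using bracket_closed by auto
  next
    case (Suc k)
    show ?case
    proof
      fix z assume "z \<in> ibr L (Suc (Suc (Suc k)))"
      then obtain x y where "z = lbr L x y" "x \<in> car L" "y \<in> ibr L (Suc (Suc k))" by auto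
      moreover have "y \<in> ibr L (Suc k)" using Suc \<open>y \<in> ibr L (Suc (Suc k))\<close> by blast
      ultimately show "z \<in> ibr L (Suc (Suc k))" by auto
    qed
  qed
  then show ?thesis by (cases k) auto
qed

lemma lcs_Suc_subset: "lcs L (Suc k) \<subseteq> lcs L k"
  unfolding lcs_def by (rule V.span_mono[OF ibr_Suc_subset])

lemma lcs_antimono: "m \<le> n \<Longrightarrow> lcs L n \<subseteq> lcs L m"
proof (induction n rule: dec_induct)
  case base then show ?case by simp
next
  case (step n) then show ?case using lcs_Suc_subset by blast
qed

lemma bracket_lcs: "x \<in> car L \<Longrightarrow> y \<in> lcs L (Suc k) \<Longrightarrow> lbr L x y \<in> lcs L (Suc (Suc k))"
proof -
  assume x: "x \<in> car L" and y: "y \<in> lcs L (Suc k)"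
  have "lbr L x y \<in> V.span {lbr L x a | a. a \<in> ibr L (Suc k)}"
    using bracket_span_right[OF ibr_subset_car x] y unfolding lcs_def by blast
  moreover have "{lbr L x a | a. a \<in> ibr L (Suc k)} \<subseteq> ibr L (Suc (Suc k))" using x by auto
  ultimately show ?thesis unfolding lcs_def using V.span_mono by blast
qed

definition homogeneous_brackets where "homogeneous_brackets k = {lbr L a b | a b. a \<in> homogeneous \<and> b \<in> lcs L (Suc k) \<inter> homogeneous}"

lemma homogeneous_brackets_subset: "homogeneous_brackets k \<subseteq> lcs L (Suc (Suc k)) \<inter> homogeneous"
proof
  fix z assume "z \<in> homogeneous_brackets k"
  then obtain a b p q where "z = lbr L a b" "a \<in> lgr L p" "b \<in> lcs L (Suc k)" "b \<in> lgr L q"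
    unfolding homogeneous_brackets_def by blast
  then show "z \<in> lcs L (Suc (Suc k)) \<inter> homogeneous" using bracket_lcs bracket_lgr lgr_subset_car by blast
qed

lemma lcs_Suc_Suc_subset_span_brackets:
  assumes IH: "lcs L (Suc k) \<subseteq> V.span (lcs L (Suc k) \<inter> homogeneous)"
  shows "lcs L (Suc (Suc k)) \<subseteq> V.span (homogeneous_brackets k)"
proof -
  have "ibr L (Suc (Suc k)) \<subseteq> V.span (homogeneous_brackets k)"
  proof
    fix z assume "z \<in> ibr L (Suc (Suc k))"
    then obtain x y where z: "z = lbr L x y" "x \<in> car L" "y \<in> ibr L (Suc k)" by auto
    have y: "y \<in> V.span (lcs L (Suc k) \<inter> homogeneous)"
      using z(3) IH V.span_superset[of "ibr L (Suc k)"] unfolding lcs_def by blast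
    have "z \<in> V.span {lbr L a b | a b. a \<in> homogeneous \<and> b \<in> lcs L (Suc k) \<inter> homogeneous}"
      unfolding z(1) by (rule bracket_span[OF homogeneous_subset_car _ _ y]) (use lcs_subset_car z(2) car_span_homogeneous in auto)
    then show "z \<in> V.span (homogeneous_brackets k)" unfolding homogeneous_brackets_def .
  qed
  then show ?thesis unfolding lcs_def by (intro V.span_minimal) auto
qed

lemma lcs_Suc_homogeneous: "lcs L (Suc k) \<subseteq> V.span (lcs L (Suc k) \<inter> homogeneous)"
proof (induction k)
  case 0
  have "car L \<inter> homogeneous = homogeneous" using homogeneous_subset_car by blast
  then show ?case using lcs_1 car_span_homogeneous by simp
next
  case (Suc k)
  have "V.span (homogeneous_brackets k) \<subseteq> V.span (lcs L (Suc (Suc k)) \<inter> homogeneous)" using homogeneous_brackets_subset V.span_mono by blast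
  then show ?case using lcs_Suc_Suc_subset_span_brackets[OF Suc] by blast
qed

lemma lcs_Suc_Suc_span_brackets: "lcs L (Suc (Suc k)) \<subseteq> V.span (homogeneous_brackets k)"
  using lcs_Suc_Suc_subset_span_brackets[OF lcs_Suc_homogeneous] .

lemma lcs_homogeneous: "lcs L k \<subseteq> V.span (lcs L k \<inter> homogeneous)"
  using lcs_Suc_homogeneous[of 0] lcs_Suc_homogeneous[of "k - 1"] lcs_0 lcs_1 by (cases k) auto

lemma bracket_bracket_lcs:
  assumes a: "a \<in> lgr L p" and b: "b \<in> lgr L q" and c: "c \<in> lcs L (Suc k)" "c \<in> lgr L r"
  shows "lbr L (lbr L a b) c \<in> lcs L (Suc (Suc (Suc k)))"
proof -
  have ac: "a \<in> car L" "b \<in> car L" "c \<in> car L" using a b c lgr_subset_car by auto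
  have J: "lbr L a (lbr L b c) = lbr L (lbr L a b) c + lsc L ((- 1) ^ (p * q)) (lbr L b (lbr L a c))"
    using jacobi[OF a b c(2)] .
  have abc: "lbr L a (lbr L b c) \<in> lcs L (Suc (Suc (Suc k)))"
    using bracket_lcs[OF ac(1) bracket_lcs[OF ac(2) c(1)]] .
  have bac: "lbr L b (lbr L a c) \<in> lcs L (Suc (Suc (Suc k)))"
    using bracket_lcs[OF ac(2) bracket_lcs[OF ac(1) c(1)]] .
  have "lbr L (lbr L a b) c = lbr L a (lbr L b c) - lsc L ((- 1) ^ (p * q)) (lbr L b (lbr L a c))"
    using J by (simp add: eq_diff_eq)
  moreover have "lsc L ((- 1) ^ (p * q)) (lbr L b (lbr L a c)) \<in> lcs L (Suc (Suc (Suc k)))"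
    by (rule V.subspace_scale[OF subspace_lcs bac])
  ultimately show ?thesis using V.subspace_diff[OF subspace_lcs abc] by simp
qed

lemma bracket_lcs_2:
  assumes z: "z \<in> lcs L 2" and c: "c \<in> lcs L (Suc k)"
  shows "lbr L z c \<in> lcs L (Suc (Suc (Suc k)))"
proof -
  have "lcs L 2 = lcs L (Suc (Suc 0))" by (simp add: numeral_2_eq_2)
  then have z': "z \<in> V.span (homogeneous_brackets 0)" using lcs_Suc_Suc_span_brackets[of 0] z by blast
  have c': "c \<in> V.span (lcs L (Suc k) \<inter> homogeneous)" using lcs_homogeneous c by blast
  have G0: "homogeneous_brackets 0 \<subseteq> car L" using homogeneous_brackets_subset[of 0] lcs_subset_car by blast
  have "lbr L z c \<in> V.span {lbr L g h | g h. g \<in> homogeneous_brackets 0 \<and> h \<in> lcs L (Suc k) \<inter> homogeneous}"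
    by (rule bracket_span[OF G0 _ z' c']) (use lcs_subset_car in auto)
  moreover have "{lbr L g h | g h. g \<in> homogeneous_brackets 0 \<and> h \<in> lcs L (Suc k) \<inter> homogeneous} \<subseteq> lcs L (Suc (Suc (Suc k)))"
  proof
    fix w assume "w \<in> {lbr L g h | g h. g \<in> homogeneous_brackets 0 \<and> h \<in> lcs L (Suc k) \<inter> homogeneous}"
    then obtain a b h p q r where "w = lbr L (lbr L a b) h" "a \<in> lgr L p" "b \<in> lgr L q"
      "h \<in> lcs L (Suc k)" "h \<in> lgr L r"
      unfolding homogeneous_brackets_def by blast
    then show "w \<in> lcs L (Suc (Suc (Suc k)))" using bracket_bracket_lcs by blast
  qed
  ultimately show ?thesis using V.span_minimal[OF _ subspace_lcs] by blast
qed

lemma subspace_bracket_sums: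
  assumes v: "\<forall>i\<in>J. v i \<in> car L" and U: "\<forall>i\<in>J. V.subspace (U i) \<and> U i \<subseteq> car L"
  shows "V.subspace {\<Sum>i\<in>J. lbr L (v i) (y i) | y. \<forall>i\<in>J. y i \<in> U i}"
proof (rule V.subspaceI)
  show "0 \<in> {\<Sum>i\<in>J. lbr L (v i) (y i) | y. \<forall>i\<in>J. y i \<in> U i}"
    using v U by (intro CollectI exI[of _ "\<lambda>_. 0"]) (simp add: V.subspace_0)
next
  fix x x' assume "x \<in> {\<Sum>i\<in>J. lbr L (v i) (y i) | y. \<forall>i\<in>J. y i \<in> U i}"
    "x' \<in> {\<Sum>i\<in>J. lbr L (v i) (y i) | y. \<forall>i\<in>J. y i \<in> U i}"
  then obtain y y' where y: "x = (\<Sum>i\<in>J. lbr L (v i) (y i))" "\<forall>i\<in>J. y i \<in> U i"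
    and y': "x' = (\<Sum>i\<in>J. lbr L (v i) (y' i))" "\<forall>i\<in>J. y' i \<in> U i" by blast
  have "x + x' = (\<Sum>i\<in>J. lbr L (v i) (y i + y' i))"
    unfolding y(1) y'(1) sum.distrib[symmetric] using U y y' v
    by (intro sum.cong) (auto simp: bracket_add_right subset_iff)
  moreover have "\<forall>i\<in>J. y i + y' i \<in> U i" using U y y' V.subspace_add by blast
  ultimately show "x + x' \<in> {\<Sum>i\<in>J. lbr L (v i) (y i) | y. \<forall>i\<in>J. y i \<in> U i}"
    by (intro CollectI exI[of _ "\<lambda>i. y i + y' i"]) simp
next
  fix c x assume "x \<in> {\<Sum>i\<in>J. lbr L (v i) (y i) | y. \<forall>i\<in>J. y i \<in> U i}"
  then obtain y where y: "x = (\<Sum>i\<in>J. lbr L (v i) (y i))" "\<forall>i\<in>J. y i \<in> U i" by blast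
  have "lsc L c x = (\<Sum>i\<in>J. lbr L (v i) (lsc L c (y i)))"
    unfolding y(1) V.scale_sum_right using U y v
    by (intro sum.cong) (auto simp: bracket_scale_right subset_iff)
  moreover have "\<forall>i\<in>J. lsc L c (y i) \<in> U i" using U y V.subspace_scale by blast
  ultimately show "lsc L c x \<in> {\<Sum>i\<in>J. lbr L (v i) (y i) | y. \<forall>i\<in>J. y i \<in> U i}"
    by (intro CollectI exI[of _ "\<lambda>i. lsc L c (y i)"]) simp
qed

lemma span_brackets_subset_sums:
  assumes J: "finite J" and v: "\<forall>i\<in>J. v i \<in> car L" and U: "\<forall>i\<in>J. V.subspace (U i) \<and> U i \<subseteq> car L"
  shows "V.span {lbr L (v i) m | i m. i \<in> J \<and> m \<in> U i}
           \<subseteq> {\<Sum>i\<in>J. lbr L (v i) (y i) | y. \<forall>i\<in>J. y i \<in> U i}"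
proof (rule V.span_minimal[OF _ subspace_bracket_sums[OF v U]])
  show "{lbr L (v i) m | i m. i \<in> J \<and> m \<in> U i} \<subseteq> {\<Sum>i\<in>J. lbr L (v i) (y i) | y. \<forall>i\<in>J. y i \<in> U i}"
  proof
    fix z assume "z \<in> {lbr L (v i) m | i m. i \<in> J \<and> m \<in> U i}"
    then obtain i m where z: "z = lbr L (v i) m" "i \<in> J" "m \<in> U i" by blast
    define y where "y = (\<lambda>i'. if i' = i then m else 0)"
    have "\<forall>i'\<in>J. y i' \<in> U i'" using U z by (auto simp: y_def intro: V.subspace_0)
    moreover have "(\<Sum>i'\<in>J. lbr L (v i') (y i')) = (\<Sum>i'\<in>J. if i' = i then lbr L (v i) m else 0)"
      using v by (intro sum.cong) (auto simp: y_def)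
    ultimately show "z \<in> {\<Sum>i\<in>J. lbr L (v i) (y i) | y. \<forall>i\<in>J. y i \<in> U i}"
      using J z by (intro CollectI exI[of _ y]) auto
  qed
qed

lemma span_Un_trans:
  assumes "x \<in> V.span (A \<union> B)" "B \<subseteq> V.span (A \<union> C)"
  shows "x \<in> V.span (A \<union> C)"
proof -
  have "A \<union> B \<subseteq> V.span (A \<union> C)" using assms(2) V.span_superset by blast
  then show ?thesis using assms(1) V.span_minimal[OF _ V.subspace_span] by blast
qed

definition generator_brackets :: "'j set \<Rightarrow> ('j \<Rightarrow> nat) \<Rightarrow> ('j \<Rightarrow> 'a) \<Rightarrow> nat \<Rightarrow> nat \<Rightarrow> 'a set" where
  "generator_brackets J d v k p = {lbr L (v i) m | i m. i \<in> J \<and> m \<in> lcs L k \<inter> lgr L (p - d i)}"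

lemma generator_brackets_antimono:
  "k \<le> n \<Longrightarrow> generator_brackets J d v n p \<subseteq> generator_brackets J d v k p"
  unfolding generator_brackets_def using lcs_antimono by blast

text \<open>Write a as a combination of the generators plus an element of L^2; the first part gives
  generator brackets, the second lands in L^(k+3) by the Jacobi identity.\<close>

lemma bracket_mod_generators:
  fixes J :: "'j set" and d :: "'j \<Rightarrow> nat" and v :: "'j \<Rightarrow> 'a"
  assumes vJ: "\<forall>i\<in>J. v i \<in> lgr L (d i)"
    and a: "a \<in> V.span (v ` {i\<in>J. d i = q} \<union> (lcs L 2 \<inter> lgr L q))"
    and b: "b \<in> lcs L (Suc k) \<inter> lgr L r" and p: "q + r = p"
  shows "lbr L a b \<in> V.span (generator_brackets J d v (Suc k) p \<union> (lcs L (Suc (Suc (Suc k))) \<inter> lgr L p))"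
    (is "_ \<in> V.span (?S \<union> ?R)")
proof -
  obtain u w where uw: "a = u + w" "u \<in> V.span (v ` {i\<in>J. d i = q})"
    "w \<in> V.span (lcs L 2 \<inter> lgr L q)" using a unfolding V.span_Un by blast
  have "w \<in> lcs L 2 \<inter> lgr L q"
    using uw(3) V.span_eq_iff[THEN iffD2, OF V.subspace_inter[OF subspace_lcs subspace_lgr]] by simp
  then have w: "w \<in> lcs L 2" "w \<in> lgr L q" by auto
  have vsub: "v ` {i\<in>J. d i = q} \<subseteq> car L" using vJ lgr_subset_car by blast
  have bcar: "b \<in> car L" using b lgr_subset_car by blast
  have split: "lbr L a b = lbr L u b + lbr L w b"
    using uw(1) span_subset_car[OF vsub] uw(2) w lgr_subset_car bcar by (simp add: bracket_add_left subset_iff)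
  have "{lbr L s b | s. s \<in> v ` {i\<in>J. d i = q}} \<subseteq> ?S"
    using b p unfolding generator_brackets_def by fastforce
  then have "lbr L u b \<in> V.span ?S"
    using bracket_span_left[OF vsub bcar uw(2)] V.span_mono by blast
  then have "lbr L u b \<in> V.span (?S \<union> ?R)" using V.span_mono[of ?S "?S \<union> ?R"] by blast
  moreover have "lbr L w b \<in> V.span (?S \<union> ?R)"
    using bracket_lcs_2[OF w(1)] bracket_lgr[OF w(2)] b p V.span_superset[of "?S \<union> ?R"] by blast
  ultimately show ?thesis using V.span_add split by simp
qed

lemma lcs_lgr_reduction_step:
  fixes J :: "'j set" and d :: "'j \<Rightarrow> nat" and v :: "'j \<Rightarrow> 'a"
  assumes vJ: "\<forall>i\<in>J. v i \<in> lgr L (d i)"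
    and gen: "\<forall>q\<le>p. lgr L q \<subseteq> V.span (v ` {i\<in>J. d i = q} \<union> (lcs L 2 \<inter> lgr L q))"
  shows "lcs L (Suc (Suc k)) \<inter> lgr L p \<subseteq>
     V.span (generator_brackets J d v (Suc k) p \<union> (lcs L (Suc (Suc (Suc k))) \<inter> lgr L p))"
    (is "_ \<subseteq> V.span (?S \<union> ?R)")
proof -
  have "homogeneous_brackets k \<inter> lgr L p \<subseteq> V.span (?S \<union> ?R)"
  proof
    fix g assume g: "g \<in> homogeneous_brackets k \<inter> lgr L p"
    then obtain a b q r where ab: "g = lbr L a b" "a \<in> lgr L q" "b \<in> lcs L (Suc k) \<inter> lgr L r"
      unfolding homogeneous_brackets_def by blast
    show "g \<in> V.span (?S \<union> ?R)"
    proof (cases "g = 0")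
      case True then show ?thesis by (simp add: V.span_zero)
    next
      case False
      have "g \<in> lgr L (q + r)" using ab bracket_lgr by blast
      then have qr: "q + r = p" using lgr_inter_zero[of g "q + r" p] g False by blast
      then have "q \<le> p" by simp
      then have "a \<in> V.span (v ` {i\<in>J. d i = q} \<union> (lcs L 2 \<inter> lgr L q))" using gen ab(2) by blast
      then show ?thesis using bracket_mod_generators[OF vJ _ ab(3) qr] ab(1) by simp
    qed
  qed
  moreover have "lcs L (Suc (Suc k)) \<inter> lgr L p \<subseteq> V.span (homogeneous_brackets k \<inter> lgr L p)"
    using span_homogeneous_lgr homogeneous_brackets_subset lcs_Suc_Suc_span_brackets by blast
  ultimately show ?thesis using V.span_minimal[OF _ V.subspace_span] by blast
qed

lemma lcs_lgr_subset_span_generator_brackets_mod: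
  fixes J :: "'j set" and d :: "'j \<Rightarrow> nat" and v :: "'j \<Rightarrow> 'a"
  assumes vJ: "\<forall>i\<in>J. v i \<in> lgr L (d i)"
    and gen: "\<forall>q\<le>p. lgr L q \<subseteq> V.span (v ` {i\<in>J. d i = q} \<union> (lcs L 2 \<inter> lgr L q))"
    and n: "Suc (Suc k) \<le> n"
  shows "lcs L (Suc (Suc k)) \<inter> lgr L p \<subseteq>
     V.span (generator_brackets J d v (Suc k) p \<union> (lcs L n \<inter> lgr L p))"
  using n
proof (induction n rule: dec_induct)
  case base
  show ?case using V.span_superset[of "generator_brackets J d v (Suc k) p \<union> _"] by blast
next
  case (step n)
  define n' where "n' = n - 2"
  have n': "n = Suc (Suc n')" using step(1) by (simp add: n'_def)
  have "generator_brackets J d v (Suc n') p \<subseteq> generator_brackets J d v (Suc k) p"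
    using step(1) n' by (intro generator_brackets_antimono) simp
  then have "V.span (generator_brackets J d v (Suc n') p \<union> (lcs L (Suc n) \<inter> lgr L p))
      \<subseteq> V.span (generator_brackets J d v (Suc k) p \<union> (lcs L (Suc n) \<inter> lgr L p))"
    by (intro V.span_mono) blast
  then have "lcs L n \<inter> lgr L p \<subseteq>
      V.span (generator_brackets J d v (Suc k) p \<union> (lcs L (Suc n) \<inter> lgr L p))"
    using lcs_lgr_reduction_step[OF vJ gen, of n'] n' by simp
  then show ?case using step(3) span_Un_trans by blast
qed

lemma nilpotent_lcs_lgr_generated:
  fixes J :: "'j set" and d :: "'j \<Rightarrow> nat" and v :: "'j \<Rightarrow> 'a"
  assumes nil: "lcs L N = {0}"
    and vJ: "\<forall>i\<in>J. v i \<in> lgr L (d i)"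
    and gen: "\<forall>q\<le>p. lgr L q \<subseteq> V.span (v ` {i\<in>J. d i = q} \<union> (lcs L 2 \<inter> lgr L q))"
  shows "lcs L (Suc (Suc k)) \<inter> lgr L p \<subseteq> V.span (generator_brackets J d v (Suc k) p)"
proof -
  define n where "n = max N (Suc (Suc k))"
  have "lcs L n \<subseteq> {0}" using lcs_antimono[of N n] nil by (simp add: n_def)
  have "V.span (generator_brackets J d v (Suc k) p \<union> (lcs L n \<inter> lgr L p))
      \<subseteq> V.span (generator_brackets J d v (Suc k) p)"
  proof (rule V.span_minimal)
    show "generator_brackets J d v (Suc k) p \<union> (lcs L n \<inter> lgr L p)
        \<subseteq> V.span (generator_brackets J d v (Suc k) p)"
      using \<open>lcs L n \<subseteq> {0}\<close> V.span_superset V.span_zero by blast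
  qed simp
  then show ?thesis
    using lcs_lgr_subset_span_generator_brackets_mod[OF vJ gen, of k n] by (simp add: n_def)
qed

lemma bracket_sum_affine_comb:
  assumes w: "\<forall>j\<in>J. w j \<in> car L" and abc: "\<forall>j. a j \<in> car L \<and> b j \<in> car L \<and> c j \<in> car L"
  shows "(\<Sum>j\<in>J. lbr L (w j) (a j + lsc L t (b j - c j))) =
    (\<Sum>j\<in>J. lbr L (w j) (a j)) + lsc L t ((\<Sum>j\<in>J. lbr L (w j) (b j)) - (\<Sum>j\<in>J. lbr L (w j) (c j)))"
proof -
  have "lbr L (w j) (a j + lsc L t (b j - c j)) =
      lbr L (w j) (a j) + lsc L t (lbr L (w j) (b j) - lbr L (w j) (c j))" if "j \<in> J" for j
  proof -
    have "lbr L (w j) (b j - c j) + lbr L (w j) (c j) = lbr L (w j) (b j)"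
      using bracket_add_right[of "w j" "b j - c j" "c j"] abc w that car_diff by simp
    then show ?thesis
      using abc w that by (simp add: bracket_add_right bracket_scale_right car_scale car_diff eq_diff_eq)
  qed
  then show ?thesis
    by (simp add: sum.distrib V.scale_sum_right[symmetric] sum_subtractf V.scale_right_diff_distrib)
qed

lemma lcs_homogeneous_component:
  assumes xs: "\<forall>q<n. xs q \<in> lgr L q" and x: "(\<Sum>q<n. xs q) \<in> lcs L k" and p: "p < n"
  shows "xs p \<in> lcs L k"
proof -
  have "(\<Sum>q<n. xs q) \<in> V.span (lcs L k \<inter> homogeneous)" using lcs_homogeneous x by blast
  from span_homogeneous_decomposition[OF Int_lower2 this]
  obtain n' ws where ws: "\<forall>q. ws q \<in> V.span ((lcs L k \<inter> homogeneous) \<inter> lgr L q)"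
    "\<forall>q\<ge>n'. ws q = 0" "(\<Sum>q<n. xs q) = (\<Sum>q<n'. ws q)"
    by blast
  have wsg: "ws q \<in> lcs L k \<inter> lgr L q" for q
  proof -
    have "V.span ((lcs L k \<inter> homogeneous) \<inter> lgr L q) \<subseteq> lcs L k \<inter> lgr L q"
      by (rule V.span_minimal[OF _ V.subspace_inter[OF subspace_lcs subspace_lgr]]) auto
    then show ?thesis using ws(1) by blast
  qed
  define N where "N = max n n'"
  define xs' where "xs' q = (if q < n then xs q else 0)" for q
  have "(\<Sum>q<N. xs' q) = (\<Sum>q<n. xs' q)"
    by (rule sum_lessThan_zero_tail) (auto simp: N_def xs'_def)
  also have "\<dots> = (\<Sum>q<n. xs q)" by (rule sum.cong) (simp_all add: xs'_def)
  also have "\<dots> = (\<Sum>q<n'. ws q)" by (rule ws(3))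
  also have "\<dots> = (\<Sum>q<N. ws q)"
    by (rule sum_lessThan_zero_tail[symmetric]) (use ws(2) in \<open>auto simp: N_def\<close>)
  finally have sums: "(\<Sum>q<N. xs' q) = (\<Sum>q<N. ws q)" .
  have "\<forall>q<N. xs' q \<in> lgr L q" "\<forall>q<N. ws q \<in> lgr L q" "p < N"
    using xs wsg p by (simp_all add: xs'_def N_def)
  then have "xs' p = ws p" using homogeneous_components_unique sums by blast
  then show ?thesis using wsg p by (simp add: xs'_def)
qed

lemma bracket_span_mod_lcs:
  assumes a: "a \<in> lgr L q" and G: "G \<subseteq> car L"
    and m: "m \<in> V.span (G \<union> (lcs L (Suc (Suc k)) \<inter> lgr L r))"
  shows "lbr L a m \<in> V.span ((\<lambda>g. lbr L a g) ` G \<union> (lcs L (Suc (Suc (Suc k))) \<inter> lgr L (q + r)))"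
    (is "_ \<in> V.span ?T")
proof -
  have sub: "G \<union> (lcs L (Suc (Suc k)) \<inter> lgr L r) \<subseteq> car L" using G lcs_subset_car by blast
  have acar: "a \<in> car L" using a lgr_subset_car by blast
  have "{lbr L a u | u. u \<in> G \<union> (lcs L (Suc (Suc k)) \<inter> lgr L r)} \<subseteq> ?T"
    using bracket_lcs[OF acar] bracket_lgr[OF a] by blast
  then show ?thesis
    using bracket_span_right[OF sub acar m] V.span_mono by blast
qed

end

section \<open>Surjective morphisms\<close>

locale graded_lie_epi = L: graded_lie_algebra L + M: graded_lie_algebra M
  for L :: "('a::ab_group_add, 'm) glie_scheme" and M :: "('b::ab_group_add, 'n) glie_scheme" +
  fixes f :: "'a \<Rightarrow> 'b"
  assumes lie_hom: "lie_hom L M f" and surj: "f ` car L = car M"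
begin

lemma map_car: "x \<in> car L \<Longrightarrow> f x \<in> car M"
  using lie_hom unfolding lie_hom_def by blast

lemma map_add: "x \<in> car L \<Longrightarrow> y \<in> car L \<Longrightarrow> f (x + y) = f x + f y"
  using lie_hom unfolding lie_hom_def by blast

lemma map_bracket: "x \<in> car L \<Longrightarrow> y \<in> car L \<Longrightarrow> f (lbr L x y) = lbr M (f x) (f y)"
  using lie_hom unfolding lie_hom_def by blast

lemma map_scale: "x \<in> car L \<Longrightarrow> f (lsc L c x) = lsc M c (f x)"
  using lie_hom unfolding lie_hom_def by blast

lemma map_lgr: "x \<in> lgr L p \<Longrightarrow> f x \<in> lgr M p"
  using lie_hom unfolding lie_hom_def by blast

lemma map_zero[simp]: "f 0 = 0"
proof -
  have "f (0 + 0) = f 0 + f 0" using map_add L.zero_in_car by blast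
  then show ?thesis by simp
qed

lemma map_diff: "x \<in> car L \<Longrightarrow> y \<in> car L \<Longrightarrow> f (x - y) = f x - f y"
proof -
  assume a: "x \<in> car L" "y \<in> car L"
  have "f ((x - y) + y) = f (x - y) + f y" using a by (intro map_add L.car_diff)
  then show ?thesis by (simp add: eq_diff_eq)
qed

lemma map_sum: "finite I \<Longrightarrow> (\<forall>i\<in>I. g i \<in> car L) \<Longrightarrow> f (\<Sum>i\<in>I. g i) = (\<Sum>i\<in>I. f (g i))"
proof (induction I rule: finite_induct)
  case empty then show ?case by simp
next
  case (insert a F)
  have "(\<Sum>i\<in>F. g i) \<in> car L" using insert by (intro L.V.subspace_sum[OF L.subspace_car]) auto
  then show ?case using insert by (simp add: map_add)
qed

lemma map_span: assumes S: "S \<subseteq> car L" shows "f ` L.V.span S = M.V.span (f ` S)"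
proof
  show "f ` L.V.span S \<subseteq> M.V.span (f ` S)"
  proof
    fix y assume "y \<in> f ` L.V.span S"
    then obtain x where x: "x \<in> L.V.span S" "y = f x" by blast
    have "x \<in> car L \<and> f x \<in> M.V.span (f ` S)" using x(1)
    proof (induction rule: L.V.span_induct_alt)
      case base then show ?case by (simp add: M.V.span_zero)
    next
      case (step c a z)
      have a: "a \<in> car L" using step S by auto
      have "f (lsc L c a + z) = lsc M c (f a) + f z"
        using a step by (simp add: map_add L.car_scale map_scale)
      moreover have "f a \<in> M.V.span (f ` S)" using step by (auto intro: M.V.span_base)
      ultimately show ?case using step a
        by (auto intro!: M.V.span_add M.V.span_scale L.car_add L.car_scale)
    qed
    then show "y \<in> M.V.span (f ` S)" using x by blast
  qed
  show "M.V.span (f ` S) \<subseteq> f ` L.V.span S"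
  proof
    fix y assume "y \<in> M.V.span (f ` S)"
    then show "y \<in> f ` L.V.span S"
    proof (induction rule: M.V.span_induct_alt)
      case base
      have "f 0 = 0" by simp
      then show ?case using L.V.span_zero by (metis image_eqI)
    next
      case (step c a z)
      then obtain s x where sx: "s \<in> S" "a = f s" "x \<in> L.V.span S" "z = f x" by blast
      have sc: "s \<in> car L" "x \<in> car L" using sx S L.span_subset_car[OF S] by auto
      have "f (lsc L c s + x) = f (lsc L c s) + f x" using sc by (intro map_add L.car_scale)
      then have "lsc M c a + z = f (lsc L c s + x)" using sx sc map_scale by simp
      moreover have "lsc L c s + x \<in> L.V.span S"
        by (rule L.V.span_add[OF L.V.span_scale[OF L.V.span_base[OF sx(1)]] sx(3)])
      ultimately show ?case by blast
    qed
  qed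
qed

lemma map_ibr: "f ` ibr L k = ibr M k"
proof -
  have "f ` ibr L (Suc k) = ibr M (Suc k)" for k
  proof (induction k)
    case 0 then show ?case using surj by simp
  next
    case (Suc k)
    show ?case
    proof
      show "f ` ibr L (Suc (Suc k)) \<subseteq> ibr M (Suc (Suc k))"
      proof
        fix z assume "z \<in> f ` ibr L (Suc (Suc k))"
        then obtain x y where xy: "z = f (lbr L x y)" "x \<in> car L" "y \<in> ibr L (Suc k)" by auto
        have "y \<in> car L" using xy L.ibr_subset_car by blast
        then have "z = lbr M (f x) (f y)" using xy map_bracket by simp
        moreover have "f x \<in> car M" using map_car xy by blast
        moreover have "f y \<in> ibr M (Suc k)" using Suc xy by blast
        ultimately show "z \<in> ibr M (Suc (Suc k))" by auto
      qed
      show "ibr M (Suc (Suc k)) \<subseteq> f ` ibr L (Suc (Suc k))"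
      proof
        fix z assume "z \<in> ibr M (Suc (Suc k))"
        then obtain x' y' where xy: "z = lbr M x' y'" "x' \<in> car M" "y' \<in> ibr M (Suc k)" by auto
        obtain x where x: "x \<in> car L" "x' = f x" using xy surj by blast
        obtain y where y: "y \<in> ibr L (Suc k)" "y' = f y" using xy Suc by blast
        have "y \<in> car L" using y L.ibr_subset_car by blast
        then have "z = f (lbr L x y)" using xy x y map_bracket by simp
        moreover have "lbr L x y \<in> ibr L (Suc (Suc k))" using x y by auto
        ultimately show "z \<in> f ` ibr L (Suc (Suc k))" by blast
      qed
    qed
  qed
  then show ?thesis using surj by (cases k) auto
qed

lemma map_lcs: "f ` lcs L k = lcs M k"
  unfolding lcs_def using map_span[OF L.ibr_subset_car] map_ibr by simp

lemma map_span_homogeneous_lgr: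
  assumes H: "H \<subseteq> L.homogeneous" and x: "x \<in> L.V.span H" and fx: "f x \<in> lgr M p"
  shows "\<exists>x'\<in>L.V.span H \<inter> lgr L p. f x' = f x"
proof -
  obtain n xs where d: "\<forall>q. xs q \<in> L.V.span (H \<inter> lgr L q)" "\<forall>q\<ge>n. xs q = 0" "x = (\<Sum>q<n. xs q)"
    using L.span_homogeneous_decomposition[OF H x] by blast
  have sg: "xs q \<in> lgr L q" for q
  proof -
    have "L.V.span (H \<inter> lgr L q) \<subseteq> lgr L q" by (rule L.V.span_minimal[OF _ L.subspace_lgr]) auto
    then show ?thesis using d(1) by blast
  qed
  have sH: "xs q \<in> L.V.span H" for q
    using d(1) L.V.span_mono[of "H \<inter> lgr L q" H] by blast
  define N where "N = max n (Suc p)"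
  have "f x = (\<Sum>q<n. f (xs q))" unfolding d(3) by (rule map_sum) (use sg L.lgr_subset_car in auto)
  also have "\<dots> = (\<Sum>q<N. f (xs q))" using d(2) by (intro sum_lessThan_zero_tail[symmetric]) (auto simp: N_def)
  finally have s1: "(\<Sum>q<N. f (xs q)) = f x" by simp
  have s2: "(\<Sum>q<N. (if q = p then f x else 0)) = f x" by (simp add: N_def less_max_iff_disj)
  have "(\<lambda>q. f (xs q)) p = (\<lambda>q. if q = p then f x else 0) p"
  proof (rule M.homogeneous_components_unique[where n=N and a="\<lambda>q. f (xs q)" and b="\<lambda>q. if q = p then f x else 0" and q=p])
    show "\<forall>q<N. (if q = p then f x else 0) \<in> lgr M q" using fx by auto
    show "\<forall>q<N. f (xs q) \<in> lgr M q" using sg map_lgr by blast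
    show "(\<Sum>q<N. f (xs q)) = (\<Sum>q<N. (if q = p then f x else 0))" using s1 s2 by simp
  qed (simp add: N_def)
  then have "f (xs p) = f x" by simp
  then show ?thesis using sg sH by blast
qed

lemma map_lgr_surj: "f ` lgr L p = lgr M p"
proof
  show "f ` lgr L p \<subseteq> lgr M p" using map_lgr by blast
  show "lgr M p \<subseteq> f ` lgr L p"
  proof
    fix y assume y: "y \<in> lgr M p"
    then obtain x where x: "x \<in> car L" "y = f x" using surj M.lgr_subset_car by blast
    have "x \<in> L.V.span L.homogeneous" using x L.car_span_homogeneous by simp
    then obtain x' where "x' \<in> L.V.span L.homogeneous \<inter> lgr L p" "f x' = f x"
      using map_span_homogeneous_lgr[OF subset_refl] y x by blast
    then show "y \<in> f ` lgr L p" using x by (metis IntD2 image_eqI)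
  qed
qed

lemma map_lcs_lgr: "f ` (lcs L k \<inter> lgr L p) = lcs M k \<inter> lgr M p"
proof
  show "f ` (lcs L k \<inter> lgr L p) \<subseteq> lcs M k \<inter> lgr M p" using map_lgr map_lcs by blast
  show "lcs M k \<inter> lgr M p \<subseteq> f ` (lcs L k \<inter> lgr L p)"
  proof
    fix y assume y: "y \<in> lcs M k \<inter> lgr M p"
    then obtain x where x: "x \<in> lcs L k" "y = f x" using map_lcs by blast
    have H: "lcs L k \<inter> L.homogeneous \<subseteq> L.homogeneous" by blast
    have "x \<in> L.V.span (lcs L k \<inter> L.homogeneous)" using x L.lcs_homogeneous by blast
    then obtain x' where x': "x' \<in> L.V.span (lcs L k \<inter> L.homogeneous) \<inter> lgr L p" "f x' = f x"
      using map_span_homogeneous_lgr[OF H] y x by blast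
    have "L.V.span (lcs L k \<inter> L.homogeneous) \<subseteq> lcs L k"
      by (rule L.V.span_minimal[OF _ L.subspace_lcs]) blast
    then have "x' \<in> lcs L k \<inter> lgr L p" using x' by blast
    then show "y \<in> f ` (lcs L k \<inter> lgr L p)" using x x' by (metis image_eqI)
  qed
qed

end

section \<open>Linear compactness\<close>

lemma (in vector_space) subspace_superset_eq_if_dim_le:
  assumes S: "subspace S" and ST: "S \<subseteq> T" and TB: "T \<subseteq> span B" and B: "finite B"
    and d: "dim T \<le> dim S"
  shows "T \<subseteq> S"
proof
  fix t assume t: "t \<in> T"
  show "t \<in> S"
  proof (rule ccontr)
    assume tS: "t \<notin> S"
    obtain b where b: "b \<subseteq> S" "independent b" "S \<subseteq> span b"
      using maximal_independent_subset[of S] by blast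
    have cb: "card b = dim S" using basis_card_eq_dim[OF b(1) b(3) b(2)] .
    have fb: "finite b" using independent_span_bound[OF B b(2)] b(1) ST TB by blast
    have "span b \<subseteq> S" using b(1) S span_minimal by blast
    then have ind: "independent (insert t b)" using tS independent_insertI[OF _ b(2)] by blast
    obtain c where c: "c \<subseteq> T" "independent c" "T \<subseteq> span c" "card c = dim T"
      using basis_exists[of T] by blast
    have fc: "finite c" using independent_span_bound[OF B c(2)] c(1) TB by blast
    have "insert t b \<subseteq> span c" using t b(1) ST c(3) by blast
    then have "card (insert t b) \<le> card c" using independent_span_bound[OF fc ind] by blast
    moreover have "t \<notin> b" using tS b(1) by blast
    ultimately show False using d fb cb c(4) by simp
  qed
qed

definition finite_inter_prop :: "'a set \<Rightarrow> 'a set set \<Rightarrow> bool" where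
  "finite_inter_prop Y F \<longleftrightarrow> (\<forall>G\<subseteq>F. finite G \<longrightarrow> Y \<inter> \<Inter>G \<noteq> {})"

lemma finite_inter_prop_maximal:
  assumes "F0 \<subseteq> Collect P" "finite_inter_prop Y F0"
  shows "\<exists>M. F0 \<subseteq> M \<and> M \<subseteq> Collect P \<and> finite_inter_prop Y M \<and>
           (\<forall>X. M \<subseteq> X \<longrightarrow> X \<subseteq> Collect P \<longrightarrow> finite_inter_prop Y X \<longrightarrow> X = M)"
proof -
  define \<P> where "\<P> = {F. F \<subseteq> Collect P \<and> F0 \<subseteq> F \<and> finite_inter_prop Y F}"
  have "\<exists>M\<in>\<P>. \<forall>X\<in>\<P>. M \<subseteq> X \<longrightarrow> X = M"
  proof (rule subset_Zorn)
    fix C assume C: "subset.chain \<P> C"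
    then have CP: "C \<subseteq> \<P>" by (simp add: subset_chain_def)
    show "\<exists>U\<in>\<P>. \<forall>X\<in>C. X \<subseteq> U"
    proof (cases "C = {}")
      case True then show ?thesis using assms unfolding \<P>_def by blast
    next
      case False
      have "finite_inter_prop Y (\<Union>C)"
        unfolding finite_inter_prop_def
      proof (intro allI impI)
        fix G assume G: "G \<subseteq> \<Union>C" "finite G"
        then obtain F where F: "F \<in> C" "G \<subseteq> F" using finite_subset_Union_chain[OF _ _ False C] by blast
        then have "finite_inter_prop Y F" using CP unfolding \<P>_def by blast
        then show "Y \<inter> \<Inter>G \<noteq> {}" using F(2) G(2) unfolding finite_inter_prop_def by blast
      qed
      moreover have "\<Union>C \<subseteq> Collect P" "F0 \<subseteq> \<Union>C" using CP False unfolding \<P>_def by blast+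
      ultimately have "\<Union>C \<in> \<P>" unfolding \<P>_def by blast
      then show ?thesis by blast
    qed
  qed
  then obtain M where M: "M \<in> \<P>" and max: "\<forall>X\<in>\<P>. M \<subseteq> X \<longrightarrow> X = M" by blast
  have "\<forall>X. M \<subseteq> X \<longrightarrow> X \<subseteq> Collect P \<longrightarrow> finite_inter_prop Y X \<longrightarrow> X = M"
  proof (intro allI impI)
    fix X assume "M \<subseteq> X" "X \<subseteq> Collect P" "finite_inter_prop Y X"
    moreover have "F0 \<subseteq> X" using M \<open>M \<subseteq> X\<close> unfolding \<P>_def by blast
    ultimately show "X = M" using max unfolding \<P>_def by blast
  qed
  moreover have "F0 \<subseteq> M" "M \<subseteq> Collect P" "finite_inter_prop Y M" using M unfolding \<P>_def by blast+
  ultimately show ?thesis by blast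
qed

lemma finite_inter_prop_insert:
  assumes M: "finite_inter_prop Y M" and F: "\<And>G. \<lbrakk>G \<subseteq> M; finite G\<rbrakk> \<Longrightarrow> Y \<inter> \<Inter>G \<inter> F \<noteq> {}"
  shows "finite_inter_prop Y (insert F M)"
  unfolding finite_inter_prop_def
proof (intro allI impI)
  fix G assume G: "G \<subseteq> insert F M" "finite G"
  show "Y \<inter> \<Inter>G \<noteq> {}"
  proof (cases "F \<in> G")
    case False
    then show ?thesis using M G unfolding finite_inter_prop_def by blast
  next
    case True
    have "\<Inter>G = \<Inter>(G - {F}) \<inter> F" using True by blast
    then show ?thesis using F[of "G - {F}"] G True by (simp add: Int_assoc subset_insert_iff)
  qed
qed

lemma finite_inter_prop_directed:
  assumes A: "A \<noteq> {}" and S: "\<And>\<alpha>. \<alpha> \<in> A \<Longrightarrow> S \<alpha> \<subseteq> Y" "\<And>\<alpha>. \<alpha> \<in> A \<Longrightarrow> S \<alpha> \<noteq> {}"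
    and directed: "\<And>\<alpha> \<beta>. \<lbrakk>\<alpha> \<in> A; \<beta> \<in> A\<rbrakk> \<Longrightarrow> \<exists>\<gamma>\<in>A. S \<gamma> \<subseteq> S \<alpha> \<inter> S \<beta>"
  shows "finite_inter_prop Y (S ` A)"
  unfolding finite_inter_prop_def
proof (intro allI impI)
  have below: "\<exists>\<gamma>\<in>A. S \<gamma> \<subseteq> \<Inter>G" if "finite G" "G \<subseteq> S ` A" for G
    using that
  proof (induction G rule: finite_induct)
    case empty then show ?case using A by blast
  next
    case (insert C G)
    obtain \<gamma>0 where \<gamma>0: "\<gamma>0 \<in> A" "S \<gamma>0 \<subseteq> \<Inter>G" using insert.IH insert.prems by blast
    obtain \<alpha> where \<alpha>: "\<alpha> \<in> A" "C = S \<alpha>" using insert.prems by blast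
    obtain \<gamma> where "\<gamma> \<in> A" "S \<gamma> \<subseteq> S \<alpha> \<inter> S \<gamma>0" using directed[OF \<alpha>(1) \<gamma>0(1)] by blast
    then show ?case using \<gamma>0(2) \<alpha>(2) by blast
  qed
  fix G assume G: "G \<subseteq> S ` A" "finite G"
  obtain \<gamma> where \<gamma>: "\<gamma> \<in> A" "S \<gamma> \<subseteq> \<Inter>G" using below[OF G(2,1)] by blast
  with S[OF \<gamma>(1)] show "Y \<inter> \<Inter>G \<noteq> {}" by blast
qed

locale linearly_compact_system =
  fixes sY :: "rat \<Rightarrow> 'y::ab_group_add \<Rightarrow> 'y" and Y :: "'y set"
    and sZ :: "'i \<Rightarrow> rat \<Rightarrow> 'z::ab_group_add \<Rightarrow> 'z" and R :: "'i \<Rightarrow> 'y \<Rightarrow> 'z"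
    and A :: "'i set"
  assumes vector_space_Y: "vector_space sY" and subspace_Y: "module.subspace sY Y"
    and vector_space_Z: "\<And>\<beta>. \<beta> \<in> A \<Longrightarrow> vector_space (sZ \<beta>)"
    and R_add: "\<And>\<beta> a b. \<lbrakk>\<beta> \<in> A; a \<in> Y; b \<in> Y\<rbrakk> \<Longrightarrow> R \<beta> (a + b) = R \<beta> a + R \<beta> b"
    and R_scale: "\<And>\<beta> a c. \<lbrakk>\<beta> \<in> A; a \<in> Y\<rbrakk> \<Longrightarrow> R \<beta> (sY c a) = sZ \<beta> c (R \<beta> a)"
    and R_finite_dim: "\<And>\<beta>. \<beta> \<in> A \<Longrightarrow> \<exists>B. finite B \<and> R \<beta> ` Y \<subseteq> module.span (sZ \<beta>) B"
    \<comment> \<open>completeness of Y as the inverse limit of its finite-dimensional images\<close>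
    and pairwise_realizable:
      "\<And>z. \<forall>\<alpha>\<in>A. \<forall>\<beta>\<in>A. \<exists>y\<in>Y. R \<alpha> y = z \<alpha> \<and> R \<beta> y = z \<beta> \<Longrightarrow> \<exists>y\<in>Y. \<forall>\<beta>\<in>A. R \<beta> y = z \<beta>"
    and A_nonempty: "A \<noteq> {}"
begin

sublocale Y: vector_space sY by (rule vector_space_Y)

lemma Y_add: "\<lbrakk>a \<in> Y; b \<in> Y\<rbrakk> \<Longrightarrow> a + b \<in> Y"
  using Y.subspace_add[OF subspace_Y] .

lemma Y_diff: "\<lbrakk>a \<in> Y; b \<in> Y\<rbrakk> \<Longrightarrow> a - b \<in> Y"
  using Y.subspace_diff[OF subspace_Y] .

lemma Y_scale: "a \<in> Y \<Longrightarrow> sY c a \<in> Y"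
  using Y.subspace_scale[OF subspace_Y] .

lemma R_diff: "\<lbrakk>\<beta> \<in> A; a \<in> Y; b \<in> Y\<rbrakk> \<Longrightarrow> R \<beta> (a - b) = R \<beta> a - R \<beta> b"
  using R_add[of \<beta> "a - b" b] Y_diff by (simp add: eq_diff_eq)

lemma R_affine_comb:
  "\<lbrakk>\<beta> \<in> A; a \<in> Y; b \<in> Y; c \<in> Y\<rbrakk> \<Longrightarrow> R \<beta> (a + sY t (b - c)) = R \<beta> a + sZ \<beta> t (R \<beta> b - R \<beta> c)"
  by (simp add: R_add R_scale R_diff Y_scale Y_diff)

definition nonempty_affine :: "'y set \<Rightarrow> bool" where
  "nonempty_affine C \<longleftrightarrow> C \<subseteq> Y \<and> C \<noteq> {} \<and> (\<forall>a\<in>C. \<forall>b\<in>C. \<forall>c\<in>C. \<forall>t. a + sY t (b - c) \<in> C)"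

lemma nonempty_affineD:
  assumes "nonempty_affine C"
  shows "C \<subseteq> Y" "C \<noteq> {}" "\<And>a b c t. \<lbrakk>a \<in> C; b \<in> C; c \<in> C\<rbrakk> \<Longrightarrow> a + sY t (b - c) \<in> C"
  using assms unfolding nonempty_affine_def by simp_all

definition saturated :: "'i \<Rightarrow> 'y set \<Rightarrow> bool" where
  "saturated \<beta> C \<longleftrightarrow> (\<forall>a\<in>C. \<forall>b\<in>Y. R \<beta> a = R \<beta> b \<longrightarrow> b \<in> C)"

definition admissible :: "'y set \<Rightarrow> bool" where
  "admissible C \<longleftrightarrow> nonempty_affine C \<and> (\<exists>\<beta>\<in>A. saturated \<beta> C)"

definition direction :: "'i \<Rightarrow> 'y set \<Rightarrow> 'z set" where
  "direction \<beta> D = {R \<beta> a - R \<beta> b | a b. a \<in> D \<and> b \<in> D}"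

lemma subspace_direction:
  assumes b: "\<beta> \<in> A" and D: "nonempty_affine D"
  shows "module.subspace (sZ \<beta>) (direction \<beta> D)"
proof -
  interpret Z: vector_space "sZ \<beta>" by (rule vector_space_Z[OF b])
  have DY: "D \<subseteq> Y" "D \<noteq> {}" and Da: "\<And>a b c t. \<lbrakk>a \<in> D; b \<in> D; c \<in> D\<rbrakk> \<Longrightarrow> a + sY t (b - c) \<in> D"
    using nonempty_affineD[OF D] by simp_all
  show ?thesis
  proof (rule Z.subspaceI)
    show "0 \<in> direction \<beta> D" unfolding direction_def using DY(2) by force
  next
    fix x y assume "x \<in> direction \<beta> D" "y \<in> direction \<beta> D"
    then obtain a b c d where abcd: "x = R \<beta> a - R \<beta> b" "y = R \<beta> c - R \<beta> d" "a \<in> D" "b \<in> D" "c \<in> D" "d \<in> D"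
      unfolding direction_def by blast
    have Y4: "a \<in> Y" "b \<in> Y" "c \<in> Y" "d \<in> Y" using abcd DY by auto
    have "R \<beta> (a + (c - d)) = R \<beta> a + (R \<beta> c - R \<beta> d)"
      using R_add[OF b Y4(1) Y_diff[OF Y4(3,4)]] R_diff[OF b Y4(3,4)] by simp
    then have "x + y = R \<beta> (a + (c - d)) - R \<beta> b" unfolding abcd(1,2) by (simp add: algebra_simps)
    moreover have "a + (c - d) \<in> D" using Da[of a c d 1] abcd by simp
    ultimately show "x + y \<in> direction \<beta> D" unfolding direction_def using abcd by blast
  next
    fix t x assume "x \<in> direction \<beta> D"
    then obtain a b where ab: "x = R \<beta> a - R \<beta> b" "a \<in> D" "b \<in> D" unfolding direction_def by blast
    have "sZ \<beta> t x = R \<beta> (b + sY t (a - b)) - R \<beta> b"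
      using ab DY R_affine_comb[OF b, of b a b t] by (simp add: subset_iff)
    then show "sZ \<beta> t x \<in> direction \<beta> D" unfolding direction_def using Da ab by blast
  qed
qed

lemma nonempty_affine_Inter:
  assumes "G \<subseteq> Collect nonempty_affine" "Y \<inter> \<Inter>G \<noteq> {}"
  shows "nonempty_affine (Y \<inter> \<Inter>G)"
  using assms Y_add Y_scale Y_diff unfolding nonempty_affine_def by (auto 4 4)

lemma admissible_fibre:
  assumes "\<beta> \<in> A" "y \<in> Y"
  shows "admissible {b\<in>Y. R \<beta> b = R \<beta> y}"
proof -
  interpret Z: vector_space "sZ \<beta>" by (rule vector_space_Z[OF assms(1)])
  have "nonempty_affine {b\<in>Y. R \<beta> b = R \<beta> y}"
    using assms R_affine_comb Y_add Y_scale Y_diff unfolding nonempty_affine_def by auto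
  moreover have "saturated \<beta> {b\<in>Y. R \<beta> b = R \<beta> y}" unfolding saturated_def by simp
  ultimately show ?thesis using assms(1) unfolding admissible_def by blast
qed

lemma nonempty_affine_finite_Inter:
  assumes M: "M \<subseteq> Collect admissible" "finite_inter_prop Y M" and G: "G \<subseteq> M" "finite G"
  shows "nonempty_affine (Y \<inter> \<Inter>G)"
proof (rule nonempty_affine_Inter)
  show "G \<subseteq> Collect nonempty_affine" using G(1) M(1) unfolding admissible_def by blast
  show "Y \<inter> \<Inter>G \<noteq> {}" using G M(2) unfolding finite_inter_prop_def by blast
qed

text \<open>A finite intersection D0 of members of M whose direction has minimal dimension under R \<beta>
  meets every further finite intersection in a set with the same R \<beta>-image; hence the fibre
  of R \<beta> through a point of D0 meets all of them.\<close>

lemma fibre_meets_finite_Inter: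
  assumes M: "M \<subseteq> Collect admissible" "finite_inter_prop Y M" and b: "\<beta> \<in> A"
    and G0: "G0 \<subseteq> M" "finite G0"
    and min: "\<And>G. \<lbrakk>G \<subseteq> M; finite G\<rbrakk> \<Longrightarrow>
      vector_space.dim (sZ \<beta>) (direction \<beta> (Y \<inter> \<Inter>G0)) \<le> vector_space.dim (sZ \<beta>) (direction \<beta> (Y \<inter> \<Inter>G))"
    and yb: "yb \<in> Y \<inter> \<Inter>G0" and G: "G \<subseteq> M" "finite G"
  shows "Y \<inter> \<Inter>G \<inter> {b\<in>Y. R \<beta> b = R \<beta> yb} \<noteq> {}"
proof -
  interpret Z: vector_space "sZ \<beta>" by (rule vector_space_Z[OF b])
  obtain B where B: "finite B" "R \<beta> ` Y \<subseteq> Z.span B" using R_finite_dim[OF b] by blast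
  define D where "D = Y \<inter> \<Inter>(G \<union> G0)"
  have D: "nonempty_affine D" unfolding D_def using nonempty_affine_finite_Inter[OF M] G G0 by simp
  have "direction \<beta> (Y \<inter> \<Inter>G0) \<subseteq> direction \<beta> D"
  proof (rule Z.subspace_superset_eq_if_dim_le[OF subspace_direction[OF b D] _ _ B(1)])
    show "direction \<beta> D \<subseteq> direction \<beta> (Y \<inter> \<Inter>G0)" unfolding direction_def D_def by blast
    show "direction \<beta> (Y \<inter> \<Inter>G0) \<subseteq> Z.span B"
      unfolding direction_def using B(2) by (blast intro: Z.span_diff)
    show "Z.dim (direction \<beta> (Y \<inter> \<Inter>G0)) \<le> Z.dim (direction \<beta> D)"
      unfolding D_def using min[of "G \<union> G0"] G G0 by simp
  qed
  moreover obtain d where d: "d \<in> D" using nonempty_affineD(2)[OF D] by blast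
  moreover have "d \<in> Y \<inter> \<Inter>G0" using d unfolding D_def by blast
  ultimately have "R \<beta> yb - R \<beta> d \<in> direction \<beta> D" using yb unfolding direction_def by blast
  then obtain a c where ac: "R \<beta> yb - R \<beta> d = R \<beta> a - R \<beta> c" "a \<in> D" "c \<in> D"
    unfolding direction_def by blast
  have DY: "D \<subseteq> Y" using nonempty_affineD(1)[OF D] .
  have "d + sY 1 (a - c) \<in> D" using nonempty_affineD(3)[OF D d ac(2,3)] .
  then have in_D: "d + (a - c) \<in> D" by simp
  have "R \<beta> (d + (a - c)) = R \<beta> d + (R \<beta> a - R \<beta> c)"
    using R_add[OF b _ Y_diff] R_diff[OF b] ac(2,3) d DY by (simp add: subset_iff)
  also have "\<dots> = R \<beta> yb" by (simp add: ac(1)[symmetric])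
  finally have "d + (a - c) \<in> D \<inter> {b\<in>Y. R \<beta> b = R \<beta> yb}" using in_D DY by blast
  then show ?thesis unfolding D_def by blast
qed

lemma maximal_family_contains_fibre:
  assumes M: "M \<subseteq> Collect admissible" "finite_inter_prop Y M" and b: "\<beta> \<in> A"
    and max: "\<And>X. \<lbrakk>M \<subseteq> X; X \<subseteq> Collect admissible; finite_inter_prop Y X\<rbrakk> \<Longrightarrow> X = M"
  shows "\<exists>y\<in>Y. {b\<in>Y. R \<beta> b = R \<beta> y} \<in> M"
proof -
  obtain G0 where G0: "G0 \<subseteq> M" "finite G0"
    and min: "\<And>G. \<lbrakk>G \<subseteq> M; finite G\<rbrakk> \<Longrightarrow>
      vector_space.dim (sZ \<beta>) (direction \<beta> (Y \<inter> \<Inter>G0)) \<le> vector_space.dim (sZ \<beta>) (direction \<beta> (Y \<inter> \<Inter>G))"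
    using ex_has_least_nat[of "\<lambda>G. G \<subseteq> M \<and> finite G" "{}"
        "\<lambda>G. vector_space.dim (sZ \<beta>) (direction \<beta> (Y \<inter> \<Inter>G))"] by blast
  obtain yb where yb: "yb \<in> Y \<inter> \<Inter>G0" using M(2) G0 unfolding finite_inter_prop_def by blast
  have "insert {b\<in>Y. R \<beta> b = R \<beta> yb} M \<subseteq> Collect admissible"
    using admissible_fibre[OF b] yb M(1) by blast
  then have "insert {b\<in>Y. R \<beta> b = R \<beta> yb} M = M"
    using max[OF subset_insertI _ finite_inter_prop_insert[OF M(2) fibre_meets_finite_Inter[OF M b G0 min yb]]]
    by blast
  then show ?thesis using yb by blast
qed

theorem Inter_directed_saturated_affine_nonempty:
  assumes S_affine: "\<And>\<alpha>. \<alpha> \<in> A \<Longrightarrow> nonempty_affine (S \<alpha>)"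
    and S_saturated: "\<And>\<alpha>. \<alpha> \<in> A \<Longrightarrow> saturated \<alpha> (S \<alpha>)"
    and S_directed: "\<And>\<alpha> \<beta>. \<lbrakk>\<alpha> \<in> A; \<beta> \<in> A\<rbrakk> \<Longrightarrow> \<exists>\<gamma>\<in>A. S \<gamma> \<subseteq> S \<alpha> \<inter> S \<beta>"
  shows "\<exists>y\<in>Y. \<forall>\<alpha>\<in>A. y \<in> S \<alpha>"
proof -
  have fip: "finite_inter_prop Y (S ` A)"
    using A_nonempty nonempty_affineD(1,2)[OF S_affine] S_directed by (rule finite_inter_prop_directed)
  have adm: "S ` A \<subseteq> Collect admissible"
  proof (rule image_subsetI)
    fix \<alpha> assume \<alpha>: "\<alpha> \<in> A"
    then show "S \<alpha> \<in> Collect admissible"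
      using S_affine[OF \<alpha>] S_saturated[OF \<alpha>] unfolding admissible_def by blast
  qed
  from finite_inter_prop_maximal[OF adm fip]
  obtain M where M: "S ` A \<subseteq> M" "M \<subseteq> Collect admissible" "finite_inter_prop Y M"
    and max: "\<forall>X. M \<subseteq> X \<longrightarrow> X \<subseteq> Collect admissible \<longrightarrow> finite_inter_prop Y X \<longrightarrow> X = M"
    by (elim exE conjE) (rule that)
  have "\<forall>\<beta>\<in>A. \<exists>y. y \<in> Y \<and> {b\<in>Y. R \<beta> b = R \<beta> y} \<in> M"
    using maximal_family_contains_fibre[OF M(2,3) _ max[rule_format]] by blast
  from bchoice[OF this]
  obtain yf where yf: "\<forall>\<beta>\<in>A. yf \<beta> \<in> Y \<and> {b\<in>Y. R \<beta> b = R \<beta> (yf \<beta>)} \<in> M"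
    by (elim exE) (rule that)
  have meet: "Y \<inter> C \<inter> C' \<noteq> {}" if "C \<in> M" "C' \<in> M" for C C'
  proof -
    have "{C, C'} \<subseteq> M" "finite {C, C'}" using that by auto
    then have "Y \<inter> \<Inter>{C, C'} \<noteq> {}" using M(3) unfolding finite_inter_prop_def by blast
    then show ?thesis by (simp add: Int_assoc)
  qed
  have "\<exists>y\<in>Y. R \<alpha> y = R \<alpha> (yf \<alpha>) \<and> R \<beta> y = R \<beta> (yf \<beta>)" if "\<alpha> \<in> A" "\<beta> \<in> A" for \<alpha> \<beta>
    using meet[of "{b\<in>Y. R \<alpha> b = R \<alpha> (yf \<alpha>)}" "{b\<in>Y. R \<beta> b = R \<beta> (yf \<beta>)}"] yf that by blast
  then obtain ys where ys: "ys \<in> Y" "\<forall>\<beta>\<in>A. R \<beta> ys = R \<beta> (yf \<beta>)"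
    using pairwise_realizable[of "\<lambda>\<beta>. R \<beta> (yf \<beta>)"] by blast
  have "ys \<in> S \<alpha>" if a: "\<alpha> \<in> A" for \<alpha>
  proof -
    have "S \<alpha> \<in> M" using M(1) a by blast
    then obtain y where y: "y \<in> S \<alpha>" "R \<alpha> y = R \<alpha> (yf \<alpha>)"
      using meet[of "S \<alpha>" "{b\<in>Y. R \<alpha> b = R \<alpha> (yf \<alpha>)}"] yf a by blast
    then have "R \<alpha> y = R \<alpha> ys" using ys a by simp
    then show ?thesis using S_saturated[OF a] y(1) ys(1) unfolding saturated_def by blast
  qed
  then show ?thesis using ys(1) by blast
qed

end

section \<open>Function spaces, tuples and quotients\<close>

lemma vector_space_pointwise:
  assumes "vector_space s"
  shows "vector_space (\<lambda>c (y::'j \<Rightarrow> 'b::ab_group_add). \<lambda>j. s c (y j))"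
proof -
  interpret vector_space s by (rule assms)
  show ?thesis
    by (unfold_locales) (auto simp: fun_eq_iff scale_right_distrib scale_left_distrib)
qed

lemma sum_fun_apply: "finite J \<Longrightarrow> (\<Sum>j\<in>J. (f j :: 'i \<Rightarrow> 'b::comm_monoid_add)) i = (\<Sum>j\<in>J. f j i)"
  by (induction J rule: finite_induct) auto

lemma pointwise_in_span_deltas:
  assumes vs: "vector_space s" and J: "finite J"
    and y: "\<forall>j\<in>J. y j \<in> module.span s B" and y0: "\<forall>j. j \<notin> J \<longrightarrow> y j = 0"
  shows "y \<in> module.span (\<lambda>c (y::'j \<Rightarrow> 'b::ab_group_add). \<lambda>j. s c (y j))
              {(\<lambda>i. if i = j then b else 0) | j b. j \<in> J \<and> b \<in> B}"
proof -
  interpret S: vector_space s by (rule vs)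
  interpret P: vector_space "\<lambda>c (y::'j \<Rightarrow> 'b). \<lambda>j. s c (y j)" by (rule vector_space_pointwise[OF vs])
  define D where "D = {(\<lambda>i. if i = j then b else 0) | j b. j \<in> J \<and> b \<in> B}"
  have del: "(\<lambda>i. if i = j then x else 0) \<in> P.span D" if j: "j \<in> J" and x: "x \<in> S.span B" for j x
    using x
  proof (induction rule: S.span_induct_alt)
    case base
    have "(\<lambda>i. if i = j then (0::'b) else 0) = 0" by (simp add: fun_eq_iff)
    then show ?case using P.span_zero by simp
  next
    case (step c b z)
    have e: "(\<lambda>i. if i = j then s c b + z else 0)
          = (\<lambda>i. s c ((\<lambda>i. if i = j then b else 0) i)) + (\<lambda>i. if i = j then z else 0)"
      by (simp add: fun_eq_iff)
    have "(\<lambda>i. if i = j then b else 0) \<in> D" unfolding D_def using step j by blast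
    then have "(\<lambda>i. s c ((\<lambda>i. if i = j then b else 0) i)) \<in> P.span D"
      using P.span_scale[OF P.span_base, of _ D c] by simp
    then show ?case using P.span_add[OF _ step(2)] e by simp
  qed
  have "y = (\<Sum>j\<in>J. (\<lambda>i. if i = j then y j else 0))"
  proof
    fix i
    have "(\<Sum>j\<in>J. (\<lambda>i. if i = j then y j else 0)) i = (\<Sum>j\<in>J. (if i = j then y j else 0))"
      using sum_fun_apply[OF J] .
    also have "\<dots> = y i" using J y0 by (cases "i \<in> J") auto
    finally show "y i = (\<Sum>j\<in>J. (\<lambda>i. if i = j then y j else 0)) i" by simp
  qed
  also have "\<dots> \<in> P.span D" using del y by (intro P.span_sum) auto
  finally show ?thesis unfolding D_def .
qed

lemma coset_eq_iff:
  fixes W :: "'a::ab_group_add set"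
  assumes W0: "0 \<in> W" and Wd: "\<And>u v. u \<in> W \<Longrightarrow> v \<in> W \<Longrightarrow> u - v \<in> W"
  shows "coset a W = coset b W \<longleftrightarrow> a - b \<in> W"
proof
  assume "coset a W = coset b W"
  then have "a + 0 \<in> coset b W" using W0 unfolding coset_def by blast
  then obtain w where "w \<in> W" "a = b + w" unfolding coset_def by auto
  then show "a - b \<in> W" by simp
next
  assume ab: "a - b \<in> W"
  have Wn: "- u \<in> W" if "u \<in> W" for u using Wd[OF W0 that] by simp
  have Wa: "u + v \<in> W" if "u \<in> W" "v \<in> W" for u v using Wd[OF that(1) Wn[OF that(2)]] by simp
  show "coset a W = coset b W"
  proof
    show "coset a W \<subseteq> coset b W"
    proof
      fix z assume "z \<in> coset a W"
      then obtain w where w: "w \<in> W" "z = a + w" unfolding coset_def by auto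
      have "z = b + ((a - b) + w)" using w by simp
      then show "z \<in> coset b W" unfolding coset_def using Wa[OF ab w(1)] by blast
    qed
    show "coset b W \<subseteq> coset a W"
    proof
      fix z assume "z \<in> coset b W"
      then obtain w where w: "w \<in> W" "z = b + w" unfolding coset_def by auto
      have "z = a + (- (a - b) + w)" using w by simp
      then show "z \<in> coset a W" unfolding coset_def using Wa[OF Wn[OF ab] w(1)] by blast
    qed
  qed
qed

lemma bij_betw_quot_induced:
  fixes g :: "'a::ab_group_add \<Rightarrow> 'b::ab_group_add"
  assumes W: "0 \<in> W" "\<And>u v. \<lbrakk>u \<in> W; v \<in> W\<rbrakk> \<Longrightarrow> u - v \<in> W"
    and W': "0 \<in> W'" "\<And>u v. \<lbrakk>u \<in> W'; v \<in> W'\<rbrakk> \<Longrightarrow> u - v \<in> W'"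
    and g: "g ` V = V'"
    and preimage: "\<And>x y. \<lbrakk>x \<in> V; y \<in> V\<rbrakk> \<Longrightarrow> x - y \<in> W \<longleftrightarrow> g x - g y \<in> W'"
  shows "\<exists>f. bij_betw f (quot V W) (quot V' W') \<and> (\<forall>x\<in>V. f (coset x W) = coset (g x) W')"
proof -
  note cW = coset_eq_iff[OF W] and cW' = coset_eq_iff[OF W']
  define f where "f C = coset (g (SOME x. x \<in> V \<and> C = coset x W)) W'" for C
  have f: "f (coset x W) = coset (g x) W'" if x: "x \<in> V" for x
  proof -
    define x' where "x' = (SOME x'. x' \<in> V \<and> coset x W = coset x' W)"
    have x': "x' \<in> V \<and> coset x W = coset x' W"
      unfolding x'_def by (rule someI[of _ x]) (use x in simp)
    then have "g x' - g x \<in> W'" using cW[of x' x] preimage[of x' x] x by auto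
    then show ?thesis unfolding f_def x'_def[symmetric] using cW' by simp
  qed
  have "inj_on f (quot V W)"
  proof (rule inj_onI)
    fix C D assume "C \<in> quot V W" "D \<in> quot V W" "f C = f D"
    then obtain x y where "x \<in> V" "y \<in> V" "C = coset x W" "D = coset y W" "f C = f D"
      unfolding quot_def by blast
    then show "C = D" using f cW cW' preimage by simp
  qed
  moreover have "f ` quot V W = quot V' W'"
    unfolding quot_def using f g by (auto simp: image_iff)
  ultimately show ?thesis using f unfolding bij_betw_def by blast
qed

definition tuples :: "'j set \<Rightarrow> ('j \<Rightarrow> 'a set) \<Rightarrow> ('j \<Rightarrow> 'a::zero) set" where
  "tuples J U = {y. \<forall>j. (j \<in> J \<longrightarrow> y j \<in> U j) \<and> (j \<notin> J \<longrightarrow> y j = 0)}"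

lemma tuplesD: "y \<in> tuples J U \<Longrightarrow> j \<in> J \<Longrightarrow> y j \<in> U j"
  and tuples_outside: "y \<in> tuples J U \<Longrightarrow> j \<notin> J \<Longrightarrow> y j = 0"
  unfolding tuples_def by blast+

lemma (in vector_space) subspace_tuples:
  assumes "\<forall>j\<in>J. subspace (U j)"
  shows "module.subspace (\<lambda>c y j. scale c (y j)) (tuples J U)"
proof -
  interpret P: vector_space "\<lambda>c (y::'j \<Rightarrow> 'b). \<lambda>j. scale c (y j)"
    by (rule vector_space_pointwise[OF vector_space_axioms])
  show ?thesis
    using assms unfolding tuples_def
    by (intro P.subspaceI) (auto intro: subspace_0 subspace_add subspace_scale)
qed

section \<open>Complete enriched Lie algebras\<close>

locale complete_enriched_system = graded_lie_algebra L for L :: "('a::ab_group_add) glie" +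
  fixes A :: "'i set" and M :: "'i \<Rightarrow> ('b::ab_group_add) glie" and \<rho> :: "'i \<Rightarrow> 'a \<Rightarrow> 'b"
  assumes complete_enriched: "complete_enriched L A M \<rho>"
begin

lemma A_nonempty: "A \<noteq> {}"
  using complete_enriched unfolding complete_enriched_def by (elim conjE)

lemma projection:
  assumes "\<alpha> \<in> A"
  shows "graded_lie (M \<alpha>)" "lie_hom L (M \<alpha>) (\<rho> \<alpha>)" "\<rho> \<alpha> ` car L = car (M \<alpha>)"
    "fin_dim (M \<alpha>)" "nilpotent_lie (M \<alpha>)"
proof -
  have "\<forall>\<alpha>\<in>A. graded_lie (M \<alpha>) \<and> lie_hom L (M \<alpha>) (\<rho> \<alpha>) \<and> \<rho> \<alpha> ` car L = car (M \<alpha>) \<and>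
     fin_dim (M \<alpha>) \<and> nilpotent_lie (M \<alpha>)"
    using complete_enriched unfolding complete_enriched_def by (elim conjE)
  then show "graded_lie (M \<alpha>)" "lie_hom L (M \<alpha>) (\<rho> \<alpha>)" "\<rho> \<alpha> ` car L = car (M \<alpha>)"
    "fin_dim (M \<alpha>)" "nilpotent_lie (M \<alpha>)"
    using assms by simp_all
qed

lemma graded_lie_algebra_M: "\<alpha> \<in> A \<Longrightarrow> graded_lie_algebra (M \<alpha>)"
  using projection(1) by (rule graded_lie_algebra.intro)

lemma epi_rho:
  assumes "\<alpha> \<in> A"
  shows "graded_lie_epi L (M \<alpha>) (\<rho> \<alpha>)"
proof (intro graded_lie_epi.intro graded_lie_epi_axioms.intro)
  show "graded_lie_algebra L" by (rule graded_lie_algebra_axioms)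
  show "graded_lie_algebra (M \<alpha>)" by (rule graded_lie_algebra_M[OF assms])
  show "lie_hom L (M \<alpha>) (\<rho> \<alpha>)" "\<rho> \<alpha> ` car L = car (M \<alpha>)" using projection assms by blast+
qed

lemma kernels_directed:
  assumes "\<alpha> \<in> A" "\<beta> \<in> A"
  shows "\<exists>\<gamma>\<in>A. hom_ker L (\<rho> \<gamma>) \<subseteq> hom_ker L (\<rho> \<alpha>) \<inter> hom_ker L (\<rho> \<beta>)"
proof -
  have "\<forall>\<alpha>\<in>A. \<forall>\<beta>\<in>A. \<exists>\<gamma>\<in>A. hom_ker L (\<rho> \<gamma>) \<subseteq> hom_ker L (\<rho> \<alpha>) \<inter> hom_ker L (\<rho> \<beta>)"
    using complete_enriched unfolding complete_enriched_def by (elim conjE)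
  then show ?thesis using assms by blast
qed

lemma rho_separating:
  assumes "x \<in> car L" "\<forall>\<alpha>\<in>A. \<rho> \<alpha> x = 0"
  shows "x = 0"
proof -
  have "(\<Inter>\<alpha>\<in>A. hom_ker L (\<rho> \<alpha>)) = {0}"
    using complete_enriched unfolding complete_enriched_def by (elim conjE)
  moreover have "x \<in> (\<Inter>\<alpha>\<in>A. hom_ker L (\<rho> \<alpha>))" using assms unfolding hom_ker_def by blast
  ultimately show ?thesis by blast
qed

lemma eq_if_rho_eq:
  assumes x: "x \<in> car L" and y: "y \<in> car L" and eq: "\<forall>\<alpha>\<in>A. \<rho> \<alpha> x = \<rho> \<alpha> y"
  shows "x = y"
proof -
  have "x - y = 0"
  proof (rule rho_separating)
    show "x - y \<in> car L" using x y by (rule car_diff)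
    show "\<forall>\<alpha>\<in>A. \<rho> \<alpha> (x - y) = 0"
      using eq graded_lie_epi.map_diff[OF epi_rho, of _ x y] x y by simp
  qed
  then show ?thesis by simp
qed

lemma compat_family_lift:
  assumes "y \<in> compat_families L A M \<rho> p"
  shows "\<exists>x\<in>lgr L p. \<forall>\<alpha>\<in>A. \<rho> \<alpha> x = y \<alpha>"
proof -
  have "\<forall>p. bij_betw (\<lambda>x. restrict (\<lambda>\<alpha>. \<rho> \<alpha> x) A) (lgr L p) (compat_families L A M \<rho> p)"
    using complete_enriched unfolding complete_enriched_def by (elim conjE)
  then have "y \<in> (\<lambda>x. restrict (\<lambda>\<alpha>. \<rho> \<alpha> x) A) ` lgr L p"
    using assms unfolding bij_betw_def by blast
  then obtain x where "x \<in> lgr L p" "y = restrict (\<lambda>\<alpha>. \<rho> \<alpha> x) A" by (rule imageE)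
  then show ?thesis by auto
qed

lemma rho_eq_if_ker_subset:
  assumes a: "\<alpha> \<in> A" and g: "\<gamma> \<in> A" and K: "hom_ker L (\<rho> \<gamma>) \<subseteq> hom_ker L (\<rho> \<alpha>)"
    and x: "x \<in> car L" "x' \<in> car L" and e: "\<rho> \<gamma> x = \<rho> \<gamma> x'"
  shows "\<rho> \<alpha> x = \<rho> \<alpha> x'"
proof -
  interpret Ha: graded_lie_epi L "M \<alpha>" "\<rho> \<alpha>" by (rule epi_rho[OF a])
  interpret Hg: graded_lie_epi L "M \<gamma>" "\<rho> \<gamma>" by (rule epi_rho[OF g])
  have "x - x' \<in> hom_ker L (\<rho> \<gamma>)" unfolding hom_ker_def using x e Hg.map_diff car_diff by simp
  then have "\<rho> \<alpha> (x - x') = 0" using K unfolding hom_ker_def by blast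
  then show ?thesis using Ha.map_diff[OF x] by simp
qed

lemma lcs_closure_iff:
  "x \<in> lcs_closure L A \<rho> k \<longleftrightarrow> x \<in> car L \<and> (\<forall>\<alpha>\<in>A. \<rho> \<alpha> x \<in> lcs (M \<alpha>) k)"
  unfolding lcs_closure_def using graded_lie_epi.map_lcs[OF epi_rho] by auto

lemma lcs_closure_subset_car: "lcs_closure L A \<rho> k \<subseteq> car L"
  unfolding lcs_closure_def by blast

lemma tuple_component_lift:
  assumes U: "\<forall>j\<in>J. U j \<subseteq> lgr L (d j)" and j: "j \<in> J"
    and z: "\<forall>\<alpha>\<in>A. \<forall>\<beta>\<in>A. \<exists>y\<in>tuples J U. (\<lambda>i. \<rho> \<alpha> (y i)) = z \<alpha> \<and> (\<lambda>i. \<rho> \<beta> (y i)) = z \<beta>"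
  shows "\<exists>x\<in>lgr L (d j). \<forall>\<beta>\<in>A. \<rho> \<beta> x = z \<beta> j"
proof -
  have yc: "y j \<in> car L" if "y \<in> tuples J U" for y
    using tuplesD[OF that j] U j lgr_subset_car by blast
  have "restrict (\<lambda>\<beta>. z \<beta> j) A \<in> compat_families L A M \<rho> (d j)"
    unfolding compat_families_def
  proof (intro CollectI conjI ballI impI)
    show "restrict (\<lambda>\<beta>. z \<beta> j) A \<in> extensional A" by simp
  next
    fix \<alpha> assume a: "\<alpha> \<in> A"
    then obtain y where y: "y \<in> tuples J U" "(\<lambda>i. \<rho> \<alpha> (y i)) = z \<alpha>" using z by blast
    have "y j \<in> lgr L (d j)" using tuplesD[OF y(1) j] U j by blast
    then have "\<rho> \<alpha> (y j) \<in> lgr (M \<alpha>) (d j)" by (rule graded_lie_epi.map_lgr[OF epi_rho[OF a]])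
    then show "restrict (\<lambda>\<beta>. z \<beta> j) A \<alpha> \<in> lgr (M \<alpha>) (d j)" using fun_cong[OF y(2), of j] a by simp
  next
    fix \<alpha> \<beta> x' assume a: "\<alpha> \<in> A" and b: "\<beta> \<in> A"
      and K: "hom_ker L (\<rho> \<beta>) \<subseteq> hom_ker L (\<rho> \<alpha>)" and x': "x' \<in> car L"
      and e: "\<rho> \<beta> x' = restrict (\<lambda>\<beta>. z \<beta> j) A \<beta>"
    obtain y where y: "y \<in> tuples J U" "(\<lambda>i. \<rho> \<alpha> (y i)) = z \<alpha>" "(\<lambda>i. \<rho> \<beta> (y i)) = z \<beta>"
      using z a b by blast
    have "\<rho> \<beta> x' = \<rho> \<beta> (y j)" using e b fun_cong[OF y(3), of j] by simp
    then have "\<rho> \<alpha> x' = \<rho> \<alpha> (y j)" using rho_eq_if_ker_subset[OF a b K x' yc[OF y(1)]] by simp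
    then show "\<rho> \<alpha> x' = restrict (\<lambda>\<beta>. z \<beta> j) A \<alpha>" using a fun_cong[OF y(2), of j] by simp
  qed
  then show ?thesis using compat_family_lift by fastforce
qed

lemma tuples_pairwise_realizable:
  assumes U: "\<forall>j\<in>J. U j \<subseteq> lgr L (d j)"
    and U_closed: "\<forall>j\<in>J. \<forall>x\<in>lgr L (d j). (\<forall>\<beta>\<in>A. \<rho> \<beta> x \<in> \<rho> \<beta> ` U j) \<longrightarrow> x \<in> U j"
    and z: "\<forall>\<alpha>\<in>A. \<forall>\<beta>\<in>A. \<exists>y\<in>tuples J U. (\<lambda>i. \<rho> \<alpha> (y i)) = z \<alpha> \<and> (\<lambda>i. \<rho> \<beta> (y i)) = z \<beta>"
  shows "\<exists>y\<in>tuples J U. \<forall>\<beta>\<in>A. (\<lambda>j. \<rho> \<beta> (y j)) = z \<beta>"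
proof -
  have zz: "\<exists>y\<in>tuples J U. (\<lambda>i. \<rho> \<beta> (y i)) = z \<beta>" if "\<beta> \<in> A" for \<beta> using z that by blast
  have "\<forall>j\<in>J. \<exists>x. x \<in> lgr L (d j) \<and> (\<forall>\<beta>\<in>A. \<rho> \<beta> x = z \<beta> j)"
    using tuple_component_lift[OF U _ z] by blast
  from bchoice[OF this]
  obtain xf where xf: "\<forall>j\<in>J. xf j \<in> lgr L (d j) \<and> (\<forall>\<beta>\<in>A. \<rho> \<beta> (xf j) = z \<beta> j)"
    by (elim exE) (rule that)
  define ys where "ys = (\<lambda>j. if j \<in> J then xf j else 0)"
  have "xf j \<in> U j" if j: "j \<in> J" for j
  proof -
    have "\<rho> \<beta> (xf j) \<in> \<rho> \<beta> ` U j" if b: "\<beta> \<in> A" for \<beta>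
    proof -
      obtain y where y: "y \<in> tuples J U" "(\<lambda>i. \<rho> \<beta> (y i)) = z \<beta>" using zz[OF b] by blast
      have "\<rho> \<beta> (xf j) = \<rho> \<beta> (y j)" using xf j b fun_cong[OF y(2), of j] by simp
      then show ?thesis using tuplesD[OF y(1) j] by blast
    qed
    then show ?thesis using U_closed j xf by blast
  qed
  then have "ys \<in> tuples J U" unfolding tuples_def ys_def by simp
  moreover have "(\<lambda>j. \<rho> \<beta> (ys j)) = z \<beta>" if b: "\<beta> \<in> A" for \<beta>
  proof
    fix j
    obtain y where y: "y \<in> tuples J U" "(\<lambda>i. \<rho> \<beta> (y i)) = z \<beta>" using zz[OF b] by blast
    show "\<rho> \<beta> (ys j) = z \<beta> j"
    proof (cases "j \<in> J")
      case True then show ?thesis using xf b unfolding ys_def by simp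
    next
      case False
      then show ?thesis
        using fun_cong[OF y(2), of j] tuples_outside[OF y(1) False] graded_lie_epi.map_zero[OF epi_rho[OF b]]
        unfolding ys_def by simp
    qed
  qed
  ultimately show ?thesis by blast
qed

lemma tuples_car:
  assumes "\<forall>j\<in>J. U j \<subseteq> car L" "y \<in> tuples J U"
  shows "y j \<in> car L"
  using assms unfolding tuples_def by (cases "j \<in> J") auto

lemma linearly_compact_tuples:
  assumes J: "finite J" and U: "\<forall>j\<in>J. V.subspace (U j) \<and> U j \<subseteq> lgr L (d j)"
    and U_closed: "\<forall>j\<in>J. \<forall>x\<in>lgr L (d j). (\<forall>\<beta>\<in>A. \<rho> \<beta> x \<in> \<rho> \<beta> ` U j) \<longrightarrow> x \<in> U j"
  shows "linearly_compact_system (\<lambda>c y j. lsc L c (y j)) (tuples J U)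
    (\<lambda>\<beta> c z j. lsc (M \<beta>) c (z j)) (\<lambda>\<beta> y j. \<rho> \<beta> (y j)) A"
proof (rule linearly_compact_system.intro)
  have Ucar: "\<forall>j\<in>J. U j \<subseteq> car L" using U lgr_subset_car by blast
  show "vector_space (\<lambda>c y j. lsc L c (y j))" by (rule vector_space_pointwise[OF V.vector_space_axioms])
  show "module.subspace (\<lambda>c y j. lsc L c (y j)) (tuples J U)" using U by (intro V.subspace_tuples) blast
  show "vector_space (\<lambda>c z j. lsc (M \<beta>) c (z j))" if "\<beta> \<in> A" for \<beta>
  proof -
    interpret Mb: graded_lie_algebra "M \<beta>" by (rule graded_lie_algebra_M[OF that])
    show ?thesis by (rule vector_space_pointwise[OF Mb.V.vector_space_axioms])
  qed
  show "(\<lambda>j. \<rho> \<beta> ((a + b) j)) = (\<lambda>j. \<rho> \<beta> (a j)) + (\<lambda>j. \<rho> \<beta> (b j))"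
    if "\<beta> \<in> A" "a \<in> tuples J U" "b \<in> tuples J U" for \<beta> a b
    using graded_lie_epi.map_add[OF epi_rho[OF that(1)]] tuples_car[OF Ucar] that by auto
  show "(\<lambda>j. \<rho> \<beta> (lsc L c (a j))) = (\<lambda>j. lsc (M \<beta>) c (\<rho> \<beta> (a j)))"
    if "\<beta> \<in> A" "a \<in> tuples J U" for \<beta> a c
    using graded_lie_epi.map_scale[OF epi_rho[OF that(1)]] tuples_car[OF Ucar] that by auto
  show "\<exists>B. finite B \<and> (\<lambda>y j. \<rho> \<beta> (y j)) ` tuples J U \<subseteq> module.span (\<lambda>c z j. lsc (M \<beta>) c (z j)) B"
    if b: "\<beta> \<in> A" for \<beta>
  proof -
    interpret H: graded_lie_epi L "M \<beta>" "\<rho> \<beta>" by (rule epi_rho[OF b])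
    obtain B where B: "finite B" "module.span (lsc (M \<beta>)) B = car (M \<beta>)"
      using projection(4)[OF b] unfolding fin_dim_def by blast
    define D where "D = {(\<lambda>i. if i = j then bb else 0) | j bb. j \<in> J \<and> bb \<in> B}"
    have "D = (\<lambda>(j, bb). (\<lambda>i. if i = j then bb else 0)) ` (J \<times> B)" unfolding D_def by auto
    then have "finite D" using J B(1) by simp
    moreover have "(\<lambda>y j. \<rho> \<beta> (y j)) ` tuples J U \<subseteq> module.span (\<lambda>c z j. lsc (M \<beta>) c (z j)) D"
      unfolding D_def
    proof (intro image_subsetI pointwise_in_span_deltas[OF H.M.V.vector_space_axioms J])
      fix y assume y: "y \<in> tuples J U"
      show "\<forall>j\<in>J. \<rho> \<beta> (y j) \<in> module.span (lsc (M \<beta>)) B"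
        using tuples_car[OF Ucar y] H.map_car B(2) by simp
      show "\<forall>j. j \<notin> J \<longrightarrow> \<rho> \<beta> (y j) = 0" using tuples_outside[OF y] by simp
    qed
    ultimately show ?thesis by blast
  qed
  show "\<exists>y\<in>tuples J U. \<forall>\<beta>\<in>A. (\<lambda>j. \<rho> \<beta> (y j)) = z \<beta>"
    if "\<forall>\<alpha>\<in>A. \<forall>\<beta>\<in>A. \<exists>y\<in>tuples J U. (\<lambda>j. \<rho> \<alpha> (y j)) = z \<alpha> \<and> (\<lambda>j. \<rho> \<beta> (y j)) = z \<beta>" for z
    using tuples_pairwise_realizable[OF _ U_closed that] U by blast
  show "A \<noteq> {}" by (rule A_nonempty)
qed

definition solutions :: "'i \<Rightarrow> 'j set \<Rightarrow> ('j \<Rightarrow> 'a) \<Rightarrow> ('j \<Rightarrow> 'a set) \<Rightarrow> 'a \<Rightarrow> ('j \<Rightarrow> 'a) set" where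
  "solutions \<alpha> J w U x = {y \<in> tuples J U. \<rho> \<alpha> (\<Sum>j\<in>J. lbr L (w j) (y j)) = \<rho> \<alpha> x}"

lemma rho_bracket_sum:
  assumes "\<alpha> \<in> A" "finite J" "\<forall>j\<in>J. w j \<in> car L \<and> y j \<in> car L"
  shows "\<rho> \<alpha> (\<Sum>j\<in>J. lbr L (w j) (y j)) = (\<Sum>j\<in>J. lbr (M \<alpha>) (\<rho> \<alpha> (w j)) (\<rho> \<alpha> (y j)))"
proof -
  interpret H: graded_lie_epi L "M \<alpha>" "\<rho> \<alpha>" by (rule epi_rho[OF assms(1)])
  show ?thesis using assms(3) bracket_closed by (simp add: H.map_sum[OF assms(2)] H.map_bracket)
qed

lemma bracket_sum_car: "\<forall>j\<in>J. w j \<in> car L \<and> y j \<in> car L \<Longrightarrow> (\<Sum>j\<in>J. lbr L (w j) (y j)) \<in> car L"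
  by (intro V.subspace_sum[OF subspace_car] bracket_closed) auto

lemma solutions_nonempty:
  assumes "\<exists>y. (\<forall>j\<in>J. y j \<in> U j) \<and> \<rho> \<alpha> (\<Sum>j\<in>J. lbr L (w j) (y j)) = \<rho> \<alpha> x"
  shows "solutions \<alpha> J w U x \<noteq> {}"
proof -
  obtain y where y: "\<forall>j\<in>J. y j \<in> U j" "\<rho> \<alpha> (\<Sum>j\<in>J. lbr L (w j) (y j)) = \<rho> \<alpha> x"
    using assms by blast
  define y' where "y' = (\<lambda>j. if j \<in> J then y j else 0)"
  have "y' \<in> tuples J U" unfolding tuples_def y'_def using y(1) by simp
  moreover have "(\<Sum>j\<in>J. lbr L (w j) (y' j)) = (\<Sum>j\<in>J. lbr L (w j) (y j))"
    unfolding y'_def by (rule sum.cong) simp_all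
  ultimately have "y' \<in> solutions \<alpha> J w U x" using y(2) unfolding solutions_def by simp
  then show ?thesis by blast
qed

lemma solutions_affine:
  assumes a: "\<alpha> \<in> A" and w: "\<forall>j\<in>J. w j \<in> car L" and U: "\<forall>j\<in>J. V.subspace (U j) \<and> U j \<subseteq> car L"
    and y: "y \<in> solutions \<alpha> J w U x" "y' \<in> solutions \<alpha> J w U x" "y'' \<in> solutions \<alpha> J w U x"
  shows "(\<lambda>j. y j + lsc L t (y' j - y'' j)) \<in> solutions \<alpha> J w U x"
proof -
  interpret H: graded_lie_epi L "M \<alpha>" "\<rho> \<alpha>" by (rule epi_rho[OF a])
  define s where "s z = (\<Sum>j\<in>J. lbr L (w j) (z j))" for z
  have Ucar: "\<forall>j\<in>J. U j \<subseteq> car L" using U by blast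
  have T3: "y \<in> tuples J U" "y' \<in> tuples J U" "y'' \<in> tuples J U"
    and r: "\<rho> \<alpha> (s y) = \<rho> \<alpha> x" "\<rho> \<alpha> (s y') = \<rho> \<alpha> x" "\<rho> \<alpha> (s y'') = \<rho> \<alpha> x"
    using y unfolding solutions_def s_def by auto
  have c: "\<forall>j. y j \<in> car L \<and> y' j \<in> car L \<and> y'' j \<in> car L"
    using tuples_car[OF Ucar T3(1)] tuples_car[OF Ucar T3(2)] tuples_car[OF Ucar T3(3)] by blast
  have sc: "s y \<in> car L" "s y' \<in> car L" "s y'' \<in> car L"
    unfolding s_def using w c by (auto intro!: bracket_sum_car)
  have "s (\<lambda>j. y j + lsc L t (y' j - y'' j)) = s y + lsc L t (s y' - s y'')"
    unfolding s_def by (rule bracket_sum_affine_comb[OF w c])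
  then have "\<rho> \<alpha> (s (\<lambda>j. y j + lsc L t (y' j - y'' j))) = \<rho> \<alpha> x"
    using sc r by (simp add: H.map_add H.map_scale H.map_diff car_scale car_diff)
  moreover have "(\<lambda>j. y j + lsc L t (y' j - y'' j)) \<in> tuples J U"
    unfolding tuples_def
  proof (intro CollectI allI conjI impI)
    fix j assume j: "j \<in> J"
    then show "y j + lsc L t (y' j - y'' j) \<in> U j"
      using U tuplesD[OF T3(1) j] tuplesD[OF T3(2) j] tuplesD[OF T3(3) j]
      by (blast intro: V.subspace_add V.subspace_scale V.subspace_diff)
  next
    fix j assume "j \<notin> J"
    then show "y j + lsc L t (y' j - y'' j) = 0"
      using tuples_outside[OF T3(1)] tuples_outside[OF T3(2)] tuples_outside[OF T3(3)] by simp
  qed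
  ultimately show ?thesis unfolding solutions_def s_def by simp
qed

lemma solutions_saturated:
  assumes a: "\<alpha> \<in> A" and J: "finite J" and w: "\<forall>j\<in>J. w j \<in> car L" and U: "\<forall>j\<in>J. U j \<subseteq> car L"
    and y: "y \<in> solutions \<alpha> J w U x" and y': "y' \<in> tuples J U" "\<forall>j. \<rho> \<alpha> (y j) = \<rho> \<alpha> (y' j)"
  shows "y' \<in> solutions \<alpha> J w U x"
proof -
  have "y \<in> tuples J U" using y unfolding solutions_def by blast
  then have "\<rho> \<alpha> (\<Sum>j\<in>J. lbr L (w j) (y' j)) = \<rho> \<alpha> (\<Sum>j\<in>J. lbr L (w j) (y j))"
    using rho_bracket_sum[OF a J] w tuples_car[OF U] y' by simp
  then show ?thesis using y y'(1) unfolding solutions_def by simp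
qed

lemma solutions_directed:
  assumes ab: "\<alpha> \<in> A" "\<beta> \<in> A" and w: "\<forall>j\<in>J. w j \<in> car L" and U: "\<forall>j\<in>J. U j \<subseteq> car L"
    and x: "x \<in> car L"
  shows "\<exists>\<gamma>\<in>A. solutions \<gamma> J w U x \<subseteq> solutions \<alpha> J w U x \<inter> solutions \<beta> J w U x"
proof -
  obtain \<gamma> where g: "\<gamma> \<in> A" "hom_ker L (\<rho> \<gamma>) \<subseteq> hom_ker L (\<rho> \<alpha>) \<inter> hom_ker L (\<rho> \<beta>)"
    using kernels_directed[OF ab] by blast
  have "y \<in> solutions \<delta> J w U x"
    if d: "\<delta> \<in> A" "hom_ker L (\<rho> \<gamma>) \<subseteq> hom_ker L (\<rho> \<delta>)" and y: "y \<in> solutions \<gamma> J w U x" for \<delta> y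
  proof -
    have yt: "y \<in> tuples J U" and e: "\<rho> \<gamma> (\<Sum>j\<in>J. lbr L (w j) (y j)) = \<rho> \<gamma> x"
      using y unfolding solutions_def by auto
    have "(\<Sum>j\<in>J. lbr L (w j) (y j)) \<in> car L"
      using w tuples_car[OF U yt] by (intro bracket_sum_car) blast
    then have "\<rho> \<delta> (\<Sum>j\<in>J. lbr L (w j) (y j)) = \<rho> \<delta> x"
      by (rule rho_eq_if_ker_subset[OF d(1) g(1) d(2) _ x e])
    then show ?thesis using yt unfolding solutions_def by blast
  qed
  then have "solutions \<gamma> J w U x \<subseteq> solutions \<alpha> J w U x \<inter> solutions \<beta> J w U x"
    using ab g(2) by blast
  then show ?thesis using g(1) by blast
qed

text \<open>The solution sets modulo the projections form a directed family of saturated affine subsets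
  of the tuple space; linear compactness makes them intersect, and separation turns a common point
  into an exact solution.\<close>

lemma bracket_sum_equation_solvable:
  fixes J :: "'j set" and d :: "'j \<Rightarrow> nat" and w :: "'j \<Rightarrow> 'a" and U :: "'j \<Rightarrow> 'a set"
  assumes J: "finite J" and w: "\<forall>j\<in>J. w j \<in> car L"
    and U: "\<forall>j\<in>J. V.subspace (U j) \<and> U j \<subseteq> lgr L (d j)"
    and U_closed: "\<forall>j\<in>J. \<forall>z\<in>lgr L (d j). (\<forall>\<beta>\<in>A. \<rho> \<beta> z \<in> \<rho> \<beta> ` U j) \<longrightarrow> z \<in> U j"
    and x: "x \<in> car L"
    and solvable: "\<forall>\<alpha>\<in>A. \<exists>y. (\<forall>j\<in>J. y j \<in> U j) \<and> \<rho> \<alpha> (\<Sum>j\<in>J. lbr L (w j) (y j)) = \<rho> \<alpha> x"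
  shows "\<exists>y. (\<forall>j\<in>J. y j \<in> U j) \<and> (\<Sum>j\<in>J. lbr L (w j) (y j)) = x"
proof -
  interpret T: linearly_compact_system "\<lambda>c y j. lsc L c (y j)" "tuples J U"
      "\<lambda>\<beta> c z j. lsc (M \<beta>) c (z j)" "\<lambda>\<beta> y j. \<rho> \<beta> (y j)" A
    by (rule linearly_compact_tuples[OF J U U_closed])
  have Ucar: "\<forall>j\<in>J. U j \<subseteq> car L" and Usub: "\<forall>j\<in>J. V.subspace (U j) \<and> U j \<subseteq> car L"
    using U lgr_subset_car by blast+
  have affine: "T.nonempty_affine (solutions \<alpha> J w U x)" if a: "\<alpha> \<in> A" for \<alpha>
    unfolding T.nonempty_affine_def
  proof (intro conjI ballI allI)
    show "solutions \<alpha> J w U x \<subseteq> tuples J U" unfolding solutions_def by blast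
    show "solutions \<alpha> J w U x \<noteq> {}" using solvable a by (intro solutions_nonempty) blast
    fix y y' y'' t assume "y \<in> solutions \<alpha> J w U x" "y' \<in> solutions \<alpha> J w U x" "y'' \<in> solutions \<alpha> J w U x"
    moreover have "y + (\<lambda>j. lsc L t ((y' - y'') j)) = (\<lambda>j. y j + lsc L t (y' j - y'' j))"
      by (simp add: fun_eq_iff)
    ultimately show "y + (\<lambda>j. lsc L t ((y' - y'') j)) \<in> solutions \<alpha> J w U x"
      using solutions_affine[OF a w Usub] by simp
  qed
  have saturated: "T.saturated \<alpha> (solutions \<alpha> J w U x)" if a: "\<alpha> \<in> A" for \<alpha>
    unfolding T.saturated_def
  proof (intro ballI impI)
    fix y y' assume "y \<in> solutions \<alpha> J w U x" "y' \<in> tuples J U" "(\<lambda>j. \<rho> \<alpha> (y j)) = (\<lambda>j. \<rho> \<alpha> (y' j))"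
    then show "y' \<in> solutions \<alpha> J w U x"
      using solutions_saturated[OF a J w Ucar] by (simp add: fun_eq_iff)
  qed
  obtain y where y: "y \<in> tuples J U" "\<forall>\<alpha>\<in>A. y \<in> solutions \<alpha> J w U x"
    using T.Inter_directed_saturated_affine_nonempty[of "\<lambda>\<alpha>. solutions \<alpha> J w U x", OF affine saturated
        solutions_directed[OF _ _ w Ucar x]]
    by blast
  have "(\<Sum>j\<in>J. lbr L (w j) (y j)) \<in> car L"
    using w tuples_car[OF Ucar y(1)] by (intro bracket_sum_car) blast
  moreover have "\<forall>\<alpha>\<in>A. \<rho> \<alpha> (\<Sum>j\<in>J. lbr L (w j) (y j)) = \<rho> \<alpha> x"
    using y(2) unfolding solutions_def by blast
  ultimately have "(\<Sum>j\<in>J. lbr L (w j) (y j)) = x" using eq_if_rho_eq x by blast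
  then show ?thesis using tuplesD[OF y(1)] by (intro exI[of _ y]) simp
qed

definition lcs_preimage :: "'i \<Rightarrow> nat \<Rightarrow> nat \<Rightarrow> 'a set" where
  "lcs_preimage \<alpha> k p = {x \<in> lgr L p. \<rho> \<alpha> x \<in> lcs (M \<alpha>) k}"

lemma subspace_lcs_preimage:
  assumes a: "\<alpha> \<in> A"
  shows "V.subspace (lcs_preimage \<alpha> k p)"
proof -
  interpret H: graded_lie_epi L "M \<alpha>" "\<rho> \<alpha>" by (rule epi_rho[OF a])
  show ?thesis
  proof (rule V.subspaceI)
    show "0 \<in> lcs_preimage \<alpha> k p"
      unfolding lcs_preimage_def using H.M.V.subspace_0[OF H.M.subspace_lcs] by simp
  next
    fix x y assume "x \<in> lcs_preimage \<alpha> k p" "y \<in> lcs_preimage \<alpha> k p"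
    then have xy: "x \<in> lgr L p" "y \<in> lgr L p" "\<rho> \<alpha> x \<in> lcs (M \<alpha>) k" "\<rho> \<alpha> y \<in> lcs (M \<alpha>) k"
      unfolding lcs_preimage_def by auto
    then have "\<rho> \<alpha> (x + y) = \<rho> \<alpha> x + \<rho> \<alpha> y" using H.map_add lgr_subset_car by blast
    then show "x + y \<in> lcs_preimage \<alpha> k p" unfolding lcs_preimage_def
      using xy V.subspace_add[OF subspace_lgr] H.M.V.subspace_add[OF H.M.subspace_lcs] by simp
  next
    fix c x assume "x \<in> lcs_preimage \<alpha> k p"
    then have x: "x \<in> lgr L p" "\<rho> \<alpha> x \<in> lcs (M \<alpha>) k" unfolding lcs_preimage_def by auto
    then have "\<rho> \<alpha> (lsc L c x) = lsc (M \<alpha>) c (\<rho> \<alpha> x)" using H.map_scale lgr_subset_car by blast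
    then show "lsc L c x \<in> lcs_preimage \<alpha> k p" unfolding lcs_preimage_def
      using x V.subspace_scale[OF subspace_lgr] H.M.V.subspace_scale[OF H.M.subspace_lcs] by simp
  qed
qed

lemma lcs_preimage_antimono:
  assumes a: "\<alpha> \<in> A" and g: "\<gamma> \<in> A" and K: "hom_ker L (\<rho> \<gamma>) \<subseteq> hom_ker L (\<rho> \<alpha>)"
  shows "lcs_preimage \<gamma> k p \<subseteq> lcs_preimage \<alpha> k p"
proof
  fix x assume x: "x \<in> lcs_preimage \<gamma> k p"
  then obtain w where w: "w \<in> lcs L k" "\<rho> \<gamma> x = \<rho> \<gamma> w"
    unfolding lcs_preimage_def using graded_lie_epi.map_lcs[OF epi_rho[OF g]] by force
  have "x \<in> car L" using x lgr_subset_car unfolding lcs_preimage_def by blast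
  then have "\<rho> \<alpha> x = \<rho> \<alpha> w" using rho_eq_if_ker_subset[OF a g K _ _ w(2)] w(1) lcs_subset_car by blast
  then show "x \<in> lcs_preimage \<alpha> k p"
    using x w(1) graded_lie_epi.map_lcs[OF epi_rho[OF a]] unfolding lcs_preimage_def by blast
qed

lemma lcs_closure_lgr_eq_Inter_lcs_preimage:
  "lcs_closure L A \<rho> k \<inter> lgr L p = (\<Inter>\<alpha>\<in>A. lcs_preimage \<alpha> k p)"
proof (intro equalityI subsetI)
  fix x assume "x \<in> lcs_closure L A \<rho> k \<inter> lgr L p"
  then show "x \<in> (\<Inter>\<alpha>\<in>A. lcs_preimage \<alpha> k p)" unfolding lcs_preimage_def using lcs_closure_iff by blast
next
  fix x assume x: "x \<in> (\<Inter>\<alpha>\<in>A. lcs_preimage \<alpha> k p)"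
  then have "x \<in> lgr L p" using A_nonempty unfolding lcs_preimage_def by blast
  then show "x \<in> lcs_closure L A \<rho> k \<inter> lgr L p"
    using x lgr_subset_car lcs_closure_iff unfolding lcs_preimage_def by blast
qed

definition nilpotency_index :: "'i \<Rightarrow> nat" where
  "nilpotency_index \<alpha> = (LEAST N. lcs (M \<alpha>) N = {0})"

lemma rho_lcs_zero:
  assumes a: "\<alpha> \<in> A" and x: "x \<in> lcs L n" and n: "nilpotency_index \<alpha> \<le> n"
  shows "\<rho> \<alpha> x = 0"
proof -
  interpret H: graded_lie_epi L "M \<alpha>" "\<rho> \<alpha>" by (rule epi_rho[OF a])
  have "lcs (M \<alpha>) (nilpotency_index \<alpha>) = {0}"
    unfolding nilpotency_index_def using projection(5)[OF a] unfolding nilpotent_lie_def by (rule LeastI_ex)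
  moreover have "\<rho> \<alpha> x \<in> lcs (M \<alpha>) (nilpotency_index \<alpha>)" using x H.map_lcs H.M.lcs_antimono[OF n] by blast
  ultimately show ?thesis by blast
qed

lemma lgr_Inter_lcs_zero:
  assumes x: "x \<in> lgr L p" and lcs: "\<forall>n. x \<in> lcs L n"
  shows "x = 0"
proof (rule rho_separating)
  show "x \<in> car L" using x lgr_subset_car by blast
  show "\<forall>\<alpha>\<in>A. \<rho> \<alpha> x = 0" using rho_lcs_zero lcs by blast
qed

lemma rho_cauchy_stable:
  assumes a: "\<alpha> \<in> A" and xs: "\<forall>n. xs n \<in> car L" and cauchy: "\<And>n m. n \<le> m \<Longrightarrow> xs m - xs n \<in> lcs L n"
    and m: "nilpotency_index \<alpha> \<le> m"
  shows "\<rho> \<alpha> (xs m) = \<rho> \<alpha> (xs (nilpotency_index \<alpha>))"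
proof -
  have "\<rho> \<alpha> (xs m - xs (nilpotency_index \<alpha>)) = 0" using rho_lcs_zero[OF a cauchy[OF m] order_refl] .
  then show ?thesis using graded_lie_epi.map_diff[OF epi_rho[OF a]] xs by simp
qed

lemma cauchy_limit_compat_family:
  assumes xs: "\<forall>n. xs n \<in> lgr L p" and cauchy: "\<And>n m. n \<le> m \<Longrightarrow> xs m - xs n \<in> lcs L n"
  shows "restrict (\<lambda>\<alpha>. \<rho> \<alpha> (xs (nilpotency_index \<alpha>))) A \<in> compat_families L A M \<rho> p"
  unfolding compat_families_def
proof (intro CollectI conjI ballI impI)
  have xs_car: "\<forall>n. xs n \<in> car L" using xs lgr_subset_car by blast
  note stable = rho_cauchy_stable[OF _ xs_car cauchy]
  show "restrict (\<lambda>\<alpha>. \<rho> \<alpha> (xs (nilpotency_index \<alpha>))) A \<in> extensional A" by simp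
  show "restrict (\<lambda>\<alpha>. \<rho> \<alpha> (xs (nilpotency_index \<alpha>))) A \<alpha> \<in> lgr (M \<alpha>) p" if "\<alpha> \<in> A" for \<alpha>
    using that graded_lie_epi.map_lgr[OF epi_rho] xs by simp
  fix \<alpha> \<beta> x' assume a: "\<alpha> \<in> A" and b: "\<beta> \<in> A" and K: "hom_ker L (\<rho> \<beta>) \<subseteq> hom_ker L (\<rho> \<alpha>)"
    and x': "x' \<in> car L" and e: "\<rho> \<beta> x' = restrict (\<lambda>\<alpha>. \<rho> \<alpha> (xs (nilpotency_index \<alpha>))) A \<beta>"
  define m where "m = max (nilpotency_index \<alpha>) (nilpotency_index \<beta>)"
  have "\<rho> \<beta> x' = \<rho> \<beta> (xs m)" using e b stable[OF b, of m] by (simp add: m_def)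
  then have "\<rho> \<alpha> x' = \<rho> \<alpha> (xs m)" using rho_eq_if_ker_subset[OF a b K x'] xs_car by blast
  then show "\<rho> \<alpha> x' = restrict (\<lambda>\<alpha>. \<rho> \<alpha> (xs (nilpotency_index \<alpha>))) A \<alpha>"
    using a stable[OF a, of m] by (simp add: m_def)
qed

end

section \<open>Finite generation modulo the closure of L^2\<close>

locale complete_enriched_fin_gen = complete_enriched_system L A M \<rho>
  for L :: "('a::ab_group_add) glie" and A :: "'i set"
    and M :: "'i \<Rightarrow> ('b::ab_group_add) glie" and \<rho> :: "'i \<Rightarrow> 'a \<Rightarrow> 'b" +
  assumes fin_gen: "\<forall>p. fin_dim_quot (lsc L) (lgr L p) (lcs_closure L A \<rho> 2 \<inter> lgr L p)"
begin

definition gens :: "nat \<Rightarrow> 'a set" where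
  "gens p = (SOME F. finite F \<and> F \<subseteq> lgr L p \<and> lgr L p \<subseteq> V.span (F \<union> (lcs_closure L A \<rho> 2 \<inter> lgr L p)))"

lemma gens: "finite (gens p)" "gens p \<subseteq> lgr L p"
  "lgr L p \<subseteq> V.span (gens p \<union> (lcs_closure L A \<rho> 2 \<inter> lgr L p))"
proof -
  have "\<exists>F. finite F \<and> F \<subseteq> lgr L p \<and> lgr L p \<subseteq> V.span (F \<union> (lcs_closure L A \<rho> 2 \<inter> lgr L p))"
    using fin_gen unfolding fin_dim_quot_def by blast
  from someI_ex[OF this]
  show "finite (gens p)" "gens p \<subseteq> lgr L p"
    "lgr L p \<subseteq> V.span (gens p \<union> (lcs_closure L A \<rho> 2 \<inter> lgr L p))"
    unfolding gens_def by blast+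
qed

definition gen_index :: "nat \<Rightarrow> (nat \<times> 'a) set" where
  "gen_index p = Sigma {..p} gens"

lemma finite_gen_index: "finite (gen_index p)"
  unfolding gen_index_def using gens(1) by auto

lemma gen_index_lgr: "i \<in> gen_index p \<Longrightarrow> fst i \<le> p \<and> snd i \<in> lgr L (fst i)"
  unfolding gen_index_def using gens(2) by (auto simp: subset_iff)

lemma lgr_M_span_gens:
  assumes a: "\<alpha> \<in> A"
  shows "lgr (M \<alpha>) q \<subseteq> module.span (lsc (M \<alpha>)) (\<rho> \<alpha> ` gens q \<union> (lcs (M \<alpha>) 2 \<inter> lgr (M \<alpha>) q))"
proof
  interpret H: graded_lie_epi L "M \<alpha>" "\<rho> \<alpha>" by (rule epi_rho[OF a])
  fix y assume "y \<in> lgr (M \<alpha>) q"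
  then obtain x where x: "x \<in> lgr L q" "y = \<rho> \<alpha> x" using H.map_lgr_surj by blast
  have sub: "gens q \<union> (lcs_closure L A \<rho> 2 \<inter> lgr L q) \<subseteq> car L"
    using gens(2) lgr_subset_car lcs_closure_subset_car by blast
  have "y \<in> H.M.V.span (\<rho> \<alpha> ` (gens q \<union> (lcs_closure L A \<rho> 2 \<inter> lgr L q)))"
    using x gens(3) H.map_span[OF sub] by blast
  moreover have "\<rho> \<alpha> ` (gens q \<union> (lcs_closure L A \<rho> 2 \<inter> lgr L q)) \<subseteq> \<rho> \<alpha> ` gens q \<union> (lcs (M \<alpha>) 2 \<inter> lgr (M \<alpha>) q)"
    using lcs_closure_iff a H.map_lgr by blast
  ultimately show "y \<in> H.M.V.span (\<rho> \<alpha> ` gens q \<union> (lcs (M \<alpha>) 2 \<inter> lgr (M \<alpha>) q))"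
    using H.M.V.span_mono by blast
qed

lemma lcs_M_lgr_generated:
  assumes a: "\<alpha> \<in> A"
  shows "lcs (M \<alpha>) (Suc (Suc k)) \<inter> lgr (M \<alpha>) p \<subseteq>
    module.span (lsc (M \<alpha>)) (graded_lie_algebra.generator_brackets (M \<alpha>) (gen_index p) fst (\<lambda>i. \<rho> \<alpha> (snd i)) (Suc k) p)"
proof -
  interpret H: graded_lie_epi L "M \<alpha>" "\<rho> \<alpha>" by (rule epi_rho[OF a])
  obtain N where N: "lcs (M \<alpha>) N = {0}" using projection(5)[OF a] unfolding nilpotent_lie_def by blast
  show ?thesis
  proof (rule H.M.nilpotent_lcs_lgr_generated[OF N])
    show "\<forall>i\<in>gen_index p. \<rho> \<alpha> (snd i) \<in> lgr (M \<alpha>) (fst i)" using gen_index_lgr H.map_lgr by blast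
    have "(\<lambda>i. \<rho> \<alpha> (snd i)) ` {i \<in> gen_index p. fst i = q} = \<rho> \<alpha> ` gens q" if "q \<le> p" for q
      using that unfolding gen_index_def by force
    then show "\<forall>q\<le>p. lgr (M \<alpha>) q \<subseteq> H.M.V.span ((\<lambda>i. \<rho> \<alpha> (snd i)) ` {i \<in> gen_index p. fst i = q} \<union>
        (lcs (M \<alpha>) 2 \<inter> lgr (M \<alpha>) q))"
      using lgr_M_span_gens[OF a] by simp
  qed
qed

lemma lcs_closure_mod_rho_bracket_sum:
  assumes a: "\<alpha> \<in> A" and x: "x \<in> lcs_closure L A \<rho> (Suc (Suc k)) \<inter> lgr L p"
  shows "\<exists>y. (\<forall>i\<in>gen_index p. y i \<in> lcs L (Suc k) \<inter> lgr L (p - fst i)) \<and>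
    \<rho> \<alpha> (\<Sum>i\<in>gen_index p. lbr L (snd i) (y i)) = \<rho> \<alpha> x"
proof -
  interpret H: graded_lie_epi L "M \<alpha>" "\<rho> \<alpha>" by (rule epi_rho[OF a])
  define U where "U i = lcs (M \<alpha>) (Suc k) \<inter> lgr (M \<alpha>) (p - fst i)" for i :: "nat \<times> 'a"
  have "\<rho> \<alpha> x \<in> lcs (M \<alpha>) (Suc (Suc k)) \<inter> lgr (M \<alpha>) p"
    using x a lcs_closure_iff H.map_lgr by blast
  then have "\<rho> \<alpha> x \<in> H.M.V.span {lbr (M \<alpha>) (\<rho> \<alpha> (snd i)) m | i m. i \<in> gen_index p \<and> m \<in> U i}"
    using lcs_M_lgr_generated[OF a] unfolding H.M.generator_brackets_def U_def by blast
  also have "\<dots> \<subseteq> {\<Sum>i\<in>gen_index p. lbr (M \<alpha>) (\<rho> \<alpha> (snd i)) (m i) | m. \<forall>i\<in>gen_index p. m i \<in> U i}"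
  proof (rule H.M.span_brackets_subset_sums[OF finite_gen_index])
    show "\<forall>i\<in>gen_index p. \<rho> \<alpha> (snd i) \<in> car (M \<alpha>)"
      using gen_index_lgr H.map_lgr H.M.lgr_subset_car by blast
    show "\<forall>i\<in>gen_index p. H.M.V.subspace (U i) \<and> U i \<subseteq> car (M \<alpha>)"
      unfolding U_def using H.M.V.subspace_inter[OF H.M.subspace_lcs H.M.subspace_lgr] H.M.lcs_subset_car by blast
  qed
  finally obtain m where m: "\<rho> \<alpha> x = (\<Sum>i\<in>gen_index p. lbr (M \<alpha>) (\<rho> \<alpha> (snd i)) (m i))"
    "\<forall>i\<in>gen_index p. m i \<in> U i" by blast
  have "\<forall>i\<in>gen_index p. \<exists>yi. yi \<in> lcs L (Suc k) \<inter> lgr L (p - fst i) \<and> \<rho> \<alpha> yi = m i"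
    using m(2) H.map_lcs_lgr unfolding U_def by (metis imageE)
  then obtain y where y: "\<forall>i\<in>gen_index p. y i \<in> lcs L (Suc k) \<inter> lgr L (p - fst i) \<and> \<rho> \<alpha> (y i) = m i"
    by metis
  have "\<forall>i\<in>gen_index p. snd i \<in> car L \<and> y i \<in> car L"
    using y gen_index_lgr lgr_subset_car by blast
  then have "\<rho> \<alpha> (\<Sum>i\<in>gen_index p. lbr L (snd i) (y i)) = \<rho> \<alpha> x"
    using rho_bracket_sum[OF a finite_gen_index] y m(1) by simp
  then show ?thesis using y by blast
qed

lemma lcs_closure_lgr_step:
  assumes IH: "lcs_closure L A \<rho> (Suc k) \<subseteq> lcs L (Suc k)"
  shows "lcs_closure L A \<rho> (Suc (Suc k)) \<inter> lgr L p \<subseteq> lcs L (Suc (Suc k))"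
proof
  fix x assume x: "x \<in> lcs_closure L A \<rho> (Suc (Suc k)) \<inter> lgr L p"
  define U where "U i = lcs L (Suc k) \<inter> lgr L (p - fst i)" for i :: "nat \<times> 'a"
  have "\<exists>y. (\<forall>i\<in>gen_index p. y i \<in> U i) \<and> (\<Sum>i\<in>gen_index p. lbr L (snd i) (y i)) = x"
  proof (rule bracket_sum_equation_solvable[where d="\<lambda>i. p - fst i"])
    show "finite (gen_index p)" by (rule finite_gen_index)
    show "\<forall>i\<in>gen_index p. snd i \<in> car L" using gen_index_lgr lgr_subset_car by blast
    show "\<forall>i\<in>gen_index p. V.subspace (U i) \<and> U i \<subseteq> lgr L (p - fst i)"
      unfolding U_def using V.subspace_inter[OF subspace_lcs subspace_lgr] by blast
    show "\<forall>i\<in>gen_index p. \<forall>z\<in>lgr L (p - fst i). (\<forall>\<beta>\<in>A. \<rho> \<beta> z \<in> \<rho> \<beta> ` U i) \<longrightarrow> z \<in> U i"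
      unfolding U_def using IH lgr_subset_car unfolding lcs_closure_def by blast
    show "x \<in> car L" using x lcs_closure_subset_car by blast
    show "\<forall>\<alpha>\<in>A. \<exists>y. (\<forall>i\<in>gen_index p. y i \<in> U i) \<and> \<rho> \<alpha> (\<Sum>i\<in>gen_index p. lbr L (snd i) (y i)) = \<rho> \<alpha> x"
      unfolding U_def using lcs_closure_mod_rho_bracket_sum x by blast
  qed
  then obtain y where y: "\<forall>i\<in>gen_index p. y i \<in> U i" "(\<Sum>i\<in>gen_index p. lbr L (snd i) (y i)) = x"
    by blast
  have "(\<Sum>i\<in>gen_index p. lbr L (snd i) (y i)) \<in> lcs L (Suc (Suc k))"
    using bracket_lcs gen_index_lgr lgr_subset_car y(1) unfolding U_def
    by (intro V.subspace_sum[OF subspace_lcs]) blast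
  then show "x \<in> lcs L (Suc (Suc k))" using y(2) by simp
qed

text \<open>L^(k) is a graded subspace: the homogeneous components of an element of L^(k) lie in L^(k),
  because each L_\<alpha>^k is graded.\<close>

lemma lcs_closure_subset_lcs_if_lgr:
  assumes lgr: "\<forall>p. lcs_closure L A \<rho> k \<inter> lgr L p \<subseteq> lcs L k"
  shows "lcs_closure L A \<rho> k \<subseteq> lcs L k"
proof
  fix x assume x: "x \<in> lcs_closure L A \<rho> k"
  have "x \<in> V.span homogeneous" using x lcs_closure_subset_car car_span_homogeneous by blast
  from span_homogeneous_decomposition[OF subset_refl this]
  obtain n xs where d: "\<forall>q. xs q \<in> V.span (homogeneous \<inter> lgr L q)" "\<forall>q\<ge>n. xs q = 0" "x = (\<Sum>q<n. xs q)"
    by blast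
  have xs: "xs q \<in> lgr L q" for q
    using d(1) V.span_minimal[OF _ subspace_lgr, of "homogeneous \<inter> lgr L q" q] by blast
  have "xs q \<in> lcs_closure L A \<rho> k" if q: "q < n" for q
  proof -
    have "\<rho> \<alpha> (xs q) \<in> lcs (M \<alpha>) k" if a: "\<alpha> \<in> A" for \<alpha>
    proof -
      interpret H: graded_lie_epi L "M \<alpha>" "\<rho> \<alpha>" by (rule epi_rho[OF a])
      have "\<rho> \<alpha> x = (\<Sum>q<n. \<rho> \<alpha> (xs q))" unfolding d(3) using xs lgr_subset_car by (intro H.map_sum) auto
      then have "(\<Sum>q<n. \<rho> \<alpha> (xs q)) \<in> lcs (M \<alpha>) k" using x a lcs_closure_iff by auto
      then show ?thesis using H.M.lcs_homogeneous_component[of n "\<lambda>q. \<rho> \<alpha> (xs q)"] xs H.map_lgr q by blast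
    qed
    then show ?thesis using lcs_closure_iff xs lgr_subset_car by blast
  qed
  then have "(\<Sum>q<n. xs q) \<in> lcs L k"
    using lgr xs by (intro V.subspace_sum[OF subspace_lcs]) blast
  then show "x \<in> lcs L k" using d(3) by simp
qed

lemma lcs_eq_lcs_closure: "1 \<le> k \<Longrightarrow> lcs L k = lcs_closure L A \<rho> k"
proof -
  have "lcs_closure L A \<rho> (Suc k) \<subseteq> lcs L (Suc k)" for k
  proof (induction k)
    case 0 then show ?case using lcs_closure_subset_car lcs_1 by simp
  next
    case (Suc k)
    show ?case by (rule lcs_closure_subset_lcs_if_lgr) (use lcs_closure_lgr_step[OF Suc] in blast)
  qed
  moreover have "lcs L k \<subseteq> lcs_closure L A \<rho> k" for k
    unfolding lcs_closure_def using lcs_subset_car by blast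
  ultimately show "1 \<le> k \<Longrightarrow> lcs L k = lcs_closure L A \<rho> k"
    by (metis Suc_pred' less_eq_Suc_le One_nat_def subset_antisym)
qed

definition extend_by_brackets :: "(nat \<Rightarrow> 'a set) \<Rightarrow> nat \<Rightarrow> 'a set" where
  "extend_by_brackets G p = G p \<union> (\<Union>i\<in>gen_index p. (\<lambda>g. lbr L (snd i) g) ` G (p - fst i))"

lemma extend_by_brackets_lgr:
  assumes "\<forall>q. G q \<subseteq> lgr L q"
  shows "extend_by_brackets G p \<subseteq> lgr L p"
proof -
  have "lbr L (snd i) g \<in> lgr L p" if "i \<in> gen_index p" "g \<in> G (p - fst i)" for i g
    using that assms gen_index_lgr[OF that(1)] bracket_lgr[of "snd i" "fst i" g "p - fst i"] by auto
  then show ?thesis using assms unfolding extend_by_brackets_def by blast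
qed

context
  fixes \<alpha> G k
  assumes a: "\<alpha> \<in> A" and G: "\<forall>q. G q \<subseteq> lgr L q"
    and span: "\<forall>q. lgr (M \<alpha>) q \<subseteq> module.span (lsc (M \<alpha>)) (\<rho> \<alpha> ` G q \<union> (lcs (M \<alpha>) (Suc (Suc k)) \<inter> lgr (M \<alpha>) q))"
begin

lemma generator_bracket_span_extend:
  assumes i: "i \<in> gen_index p" and m: "m \<in> lcs (M \<alpha>) (Suc k) \<inter> lgr (M \<alpha>) (p - fst i)"
  shows "lbr (M \<alpha>) (\<rho> \<alpha> (snd i)) m \<in> module.span (lsc (M \<alpha>))
    (\<rho> \<alpha> ` extend_by_brackets G p \<union> (lcs (M \<alpha>) (Suc (Suc (Suc k))) \<inter> lgr (M \<alpha>) p))"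
proof -
  interpret H: graded_lie_epi L "M \<alpha>" "\<rho> \<alpha>" by (rule epi_rho[OF a])
  have "fst i \<le> p \<and> snd i \<in> lgr L (fst i)" by (rule gen_index_lgr[OF i])
  then have si: "snd i \<in> lgr L (fst i)" "fst i + (p - fst i) = p" by simp_all
  have Gc: "\<rho> \<alpha> ` G (p - fst i) \<subseteq> car (M \<alpha>)" using G H.map_lgr H.M.lgr_subset_car by blast
  have "m \<in> H.M.V.span (\<rho> \<alpha> ` G (p - fst i) \<union> (lcs (M \<alpha>) (Suc (Suc k)) \<inter> lgr (M \<alpha>) (p - fst i)))"
    using span m by blast
  from H.M.bracket_span_mod_lcs[OF H.map_lgr[OF si(1)] Gc this]
  have "lbr (M \<alpha>) (\<rho> \<alpha> (snd i)) m \<in> H.M.V.span ((\<lambda>g. lbr (M \<alpha>) (\<rho> \<alpha> (snd i)) g) ` \<rho> \<alpha> ` G (p - fst i)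
      \<union> (lcs (M \<alpha>) (Suc (Suc (Suc k))) \<inter> lgr (M \<alpha>) p))"
    using si(2) by simp
  moreover have "(\<lambda>g. lbr (M \<alpha>) (\<rho> \<alpha> (snd i)) g) ` \<rho> \<alpha> ` G (p - fst i) \<subseteq> \<rho> \<alpha> ` extend_by_brackets G p"
  proof (intro image_subsetI, elim imageE)
    fix u g assume g: "g \<in> G (p - fst i)" "u = \<rho> \<alpha> g"
    have "g \<in> car L" "snd i \<in> car L" using g(1) G si(1) lgr_subset_car by blast+
    then have "lbr (M \<alpha>) (\<rho> \<alpha> (snd i)) u = \<rho> \<alpha> (lbr L (snd i) g)"
      using H.map_bracket g(2) by simp
    moreover have "lbr L (snd i) g \<in> extend_by_brackets G p"
      unfolding extend_by_brackets_def using i g(1) by blast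
    ultimately show "lbr (M \<alpha>) (\<rho> \<alpha> (snd i)) u \<in> \<rho> \<alpha> ` extend_by_brackets G p" by simp
  qed
  ultimately show ?thesis using H.M.V.span_mono[OF Un_mono[OF _ order_refl]] by blast
qed

lemma lgr_M_span_extend_by_brackets:
  "lgr (M \<alpha>) p \<subseteq> module.span (lsc (M \<alpha>))
    (\<rho> \<alpha> ` extend_by_brackets G p \<union> (lcs (M \<alpha>) (Suc (Suc (Suc k))) \<inter> lgr (M \<alpha>) p))"
    (is "_ \<subseteq> ?T")
proof -
  interpret H: graded_lie_epi L "M \<alpha>" "\<rho> \<alpha>" by (rule epi_rho[OF a])
  have "H.M.generator_brackets (gen_index p) fst (\<lambda>i. \<rho> \<alpha> (snd i)) (Suc k) p \<subseteq> ?T"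
    unfolding H.M.generator_brackets_def using generator_bracket_span_extend by blast
  then have "H.M.V.span (H.M.generator_brackets (gen_index p) fst (\<lambda>i. \<rho> \<alpha> (snd i)) (Suc k) p) \<subseteq> ?T"
    by (rule H.M.V.span_minimal) simp
  with lcs_M_lgr_generated[OF a, of k p] have "lcs (M \<alpha>) (Suc (Suc k)) \<inter> lgr (M \<alpha>) p \<subseteq> ?T"
    by (rule order_trans)
  moreover have "\<rho> \<alpha> ` G p \<subseteq> ?T"
    unfolding extend_by_brackets_def by (rule order_trans[OF _ H.M.V.span_superset]) blast
  ultimately have "H.M.V.span (\<rho> \<alpha> ` G p \<union> (lcs (M \<alpha>) (Suc (Suc k)) \<inter> lgr (M \<alpha>) p)) \<subseteq> ?T"
    by (intro H.M.V.span_minimal) simp_all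
  with spec[OF span, of p] show ?thesis by (rule order_trans)
qed

end

lemma lgr_finite_span_mod_lcs_Suc_Suc:
  "\<exists>G. finite G \<and> G \<subseteq> lgr L p \<and>
     (\<forall>\<alpha>\<in>A. lgr (M \<alpha>) p \<subseteq> module.span (lsc (M \<alpha>)) (\<rho> \<alpha> ` G \<union> (lcs (M \<alpha>) (Suc (Suc k)) \<inter> lgr (M \<alpha>) p)))"
proof (induction k arbitrary: p)
  case 0
  show ?case using lgr_M_span_gens gens(1,2) by (intro exI[of _ "gens p"]) (simp add: numeral_2_eq_2)
next
  case (Suc k)
  then obtain G where G: "\<And>q. finite (G q) \<and> G q \<subseteq> lgr L q \<and> (\<forall>\<alpha>\<in>A. lgr (M \<alpha>) q \<subseteq>
      module.span (lsc (M \<alpha>)) (\<rho> \<alpha> ` G q \<union> (lcs (M \<alpha>) (Suc (Suc k)) \<inter> lgr (M \<alpha>) q)))"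
    by metis
  have "finite (extend_by_brackets G p)"
    unfolding extend_by_brackets_def using G finite_gen_index by auto
  moreover have "extend_by_brackets G p \<subseteq> lgr L p" using G by (intro extend_by_brackets_lgr) blast
  moreover have "\<forall>\<alpha>\<in>A. lgr (M \<alpha>) p \<subseteq> module.span (lsc (M \<alpha>))
      (\<rho> \<alpha> ` extend_by_brackets G p \<union> (lcs (M \<alpha>) (Suc (Suc (Suc k))) \<inter> lgr (M \<alpha>) p))"
  proof
    fix \<alpha> assume a: "\<alpha> \<in> A"
    have "\<forall>q. G q \<subseteq> lgr L q"
      "\<forall>q. lgr (M \<alpha>) q \<subseteq> module.span (lsc (M \<alpha>)) (\<rho> \<alpha> ` G q \<union> (lcs (M \<alpha>) (Suc (Suc k)) \<inter> lgr (M \<alpha>) q))"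
      using G a by blast+
    then show "lgr (M \<alpha>) p \<subseteq> module.span (lsc (M \<alpha>))
        (\<rho> \<alpha> ` extend_by_brackets G p \<union> (lcs (M \<alpha>) (Suc (Suc (Suc k))) \<inter> lgr (M \<alpha>) p))"
      by (rule lgr_M_span_extend_by_brackets[OF a])
  qed
  ultimately show ?case by blast
qed

lemma lgr_finite_span_mod_lcs:
  "\<exists>G. finite G \<and> G \<subseteq> lgr L p \<and>
     (\<forall>\<alpha>\<in>A. lgr (M \<alpha>) p \<subseteq> module.span (lsc (M \<alpha>)) (\<rho> \<alpha> ` G \<union> (lcs (M \<alpha>) k \<inter> lgr (M \<alpha>) p)))"
proof (cases "k \<le> 1")
  case True
  have "lgr (M \<alpha>) p \<subseteq> module.span (lsc (M \<alpha>)) (lcs (M \<alpha>) k \<inter> lgr (M \<alpha>) p)" if "\<alpha> \<in> A" for \<alpha>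
  proof -
    interpret Ma: graded_lie_algebra "M \<alpha>" by (rule graded_lie_algebra_M[OF that])
    have "lcs (M \<alpha>) k = car (M \<alpha>)" using True Ma.lcs_0 Ma.lcs_1 by (cases k) auto
    then show ?thesis using Ma.lgr_subset_car Ma.V.span_superset by blast
  qed
  then show ?thesis by (intro exI[of _ "{}"]) auto
next
  case False
  then have "k = Suc (Suc (k - 2))" by simp
  then show ?thesis using lgr_finite_span_mod_lcs_Suc_Suc[of p "k - 2"] by simp
qed

lemma lcs_preimage_subset_if_agree_on_span:
  assumes g: "\<gamma> \<in> A" and G: "G \<subseteq> lgr L p"
    and span: "lgr (M \<gamma>) p \<subseteq> module.span (lsc (M \<gamma>)) (\<rho> \<gamma> ` G \<union> (lcs (M \<gamma>) k \<inter> lgr (M \<gamma>) p))"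
    and finer: "lcs_preimage \<gamma> k p \<subseteq> lcs_preimage \<alpha> k p" and a: "\<alpha> \<in> A"
    and agree: "lcs_preimage \<alpha> k p \<inter> V.span G \<subseteq> lcs_preimage \<gamma> k p"
  shows "lcs_preimage \<alpha> k p \<subseteq> lcs_preimage \<gamma> k p"
proof
  interpret Hg: graded_lie_epi L "M \<gamma>" "\<rho> \<gamma>" by (rule epi_rho[OF g])
  fix x assume x: "x \<in> lcs_preimage \<alpha> k p"
  then have xp: "x \<in> lgr L p" unfolding lcs_preimage_def by blast
  then have "\<rho> \<gamma> x \<in> Hg.M.V.span (\<rho> \<gamma> ` G \<union> (lcs (M \<gamma>) k \<inter> lgr (M \<gamma>) p))" using span Hg.map_lgr by blast
  then obtain u m where um: "\<rho> \<gamma> x = u + m" "u \<in> Hg.M.V.span (\<rho> \<gamma> ` G)"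
    "m \<in> Hg.M.V.span (lcs (M \<gamma>) k \<inter> lgr (M \<gamma>) p)"
    unfolding Hg.M.V.span_Un by blast
  have m: "m \<in> lcs (M \<gamma>) k"
    using um(3) Hg.M.V.span_eq_iff[THEN iffD2, OF Hg.M.V.subspace_inter[OF Hg.M.subspace_lcs Hg.M.subspace_lgr]]
    by simp
  have Gc: "G \<subseteq> car L" using G lgr_subset_car by blast
  obtain g0 where g0: "g0 \<in> V.span G" "u = \<rho> \<gamma> g0" using um(2) Hg.map_span[OF Gc] by blast
  have g0p: "g0 \<in> lgr L p" using g0(1) V.span_minimal[OF G subspace_lgr] by blast
  have "x \<in> car L" "g0 \<in> car L" using xp g0p lgr_subset_car by blast+
  then have "\<rho> \<gamma> (x - g0) = m" using um(1) g0(2) Hg.map_diff by simp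
  then have xg: "x - g0 \<in> lcs_preimage \<gamma> k p"
    unfolding lcs_preimage_def using m V.subspace_diff[OF subspace_lgr xp g0p] by simp
  then have "x - (x - g0) \<in> lcs_preimage \<alpha> k p"
    using finer x V.subspace_diff[OF subspace_lcs_preimage[OF a]] by blast
  then have "g0 \<in> lcs_preimage \<alpha> k p" by simp
  then have "g0 \<in> lcs_preimage \<gamma> k p" using agree g0(1) by blast
  then have "(x - g0) + g0 \<in> lcs_preimage \<gamma> k p" using xg V.subspace_add[OF subspace_lcs_preimage[OF g]] by blast
  then show "x \<in> lcs_preimage \<gamma> k p" by simp
qed

text \<open>Choose \<alpha>0 minimising the dimension of the preimage inside the finite-dimensional span G;
  every finer index then has the same preimage, so \<alpha>0 already computes L^(k) in degree p.\<close>

lemma lcs_closure_lgr_eq_lcs_preimage: "\<exists>\<alpha>0\<in>A. lcs_closure L A \<rho> k \<inter> lgr L p = lcs_preimage \<alpha>0 k p"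
proof -
  obtain G where G: "finite G" "G \<subseteq> lgr L p"
    "\<forall>\<alpha>\<in>A. lgr (M \<alpha>) p \<subseteq> module.span (lsc (M \<alpha>)) (\<rho> \<alpha> ` G \<union> (lcs (M \<alpha>) k \<inter> lgr (M \<alpha>) p))"
    using lgr_finite_span_mod_lcs[where p=p and k=k] by blast
  define Z where "Z \<alpha> = lcs_preimage \<alpha> k p \<inter> V.span G" for \<alpha>
  obtain \<alpha>0 where a0: "\<alpha>0 \<in> A" "\<And>\<alpha>. \<alpha> \<in> A \<Longrightarrow> V.dim (Z \<alpha>0) \<le> V.dim (Z \<alpha>)"
    using ex_has_least_nat[of "\<lambda>\<alpha>. \<alpha> \<in> A" _ "\<lambda>\<alpha>. V.dim (Z \<alpha>)"] A_nonempty by blast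
  have "lcs_preimage \<alpha>0 k p \<subseteq> lcs_preimage \<beta> k p" if b: "\<beta> \<in> A" for \<beta>
  proof -
    obtain \<gamma> where g: "\<gamma> \<in> A" "hom_ker L (\<rho> \<gamma>) \<subseteq> hom_ker L (\<rho> \<alpha>0) \<inter> hom_ker L (\<rho> \<beta>)"
      using kernels_directed[OF a0(1) b] by blast
    have finer: "lcs_preimage \<gamma> k p \<subseteq> lcs_preimage \<alpha>0 k p" "lcs_preimage \<gamma> k p \<subseteq> lcs_preimage \<beta> k p"
      using lcs_preimage_antimono[OF a0(1) g(1)] lcs_preimage_antimono[OF b g(1)] g(2) by auto
    have "Z \<alpha>0 \<subseteq> Z \<gamma>"
    proof (rule V.subspace_superset_eq_if_dim_le[OF _ _ _ G(1)])
      show "V.subspace (Z \<gamma>)" unfolding Z_def by (rule V.subspace_inter[OF subspace_lcs_preimage[OF g(1)] V.subspace_span])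
      show "Z \<gamma> \<subseteq> Z \<alpha>0" "Z \<alpha>0 \<subseteq> V.span G" using finer(1) unfolding Z_def by blast+
      show "V.dim (Z \<alpha>0) \<le> V.dim (Z \<gamma>)" using a0(2)[OF g(1)] .
    qed
    moreover have "lgr (M \<gamma>) p \<subseteq> module.span (lsc (M \<gamma>)) (\<rho> \<gamma> ` G \<union> (lcs (M \<gamma>) k \<inter> lgr (M \<gamma>) p))"
      using G(3) g(1) by blast
    ultimately have "lcs_preimage \<alpha>0 k p \<subseteq> lcs_preimage \<gamma> k p"
      using lcs_preimage_subset_if_agree_on_span[OF g(1) G(2) _ finer(1) a0(1)] unfolding Z_def by blast
    then show ?thesis using finer(2) by blast
  qed
  then have "lcs_preimage \<alpha>0 k p \<subseteq> (\<Inter>\<beta>\<in>A. lcs_preimage \<beta> k p)" by (rule INT_greatest)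
  with INT_lower[OF a0(1)] have "lcs_closure L A \<rho> k \<inter> lgr L p = lcs_preimage \<alpha>0 k p"
    unfolding lcs_closure_lgr_eq_Inter_lcs_preimage by (rule subset_antisym)
  then show ?thesis using a0(1) by blast
qed

lemma quot_lgr_lcs_closure_iso:
  "\<exists>\<alpha>\<in>A. \<exists>f.
     bij_betw f (quot (lgr L p) (lcs_closure L A \<rho> k \<inter> lgr L p))
                (quot (lgr (M \<alpha>) p) (lcs (M \<alpha>) k \<inter> lgr (M \<alpha>) p)) \<and>
     (\<forall>x\<in>lgr L p. f (coset x (lcs_closure L A \<rho> k \<inter> lgr L p)) = coset (\<rho> \<alpha> x) (lcs (M \<alpha>) k \<inter> lgr (M \<alpha>) p))"
proof -
  obtain \<alpha> where a: "\<alpha> \<in> A" and W: "lcs_closure L A \<rho> k \<inter> lgr L p = lcs_preimage \<alpha> k p"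
    using lcs_closure_lgr_eq_lcs_preimage by blast
  interpret H: graded_lie_epi L "M \<alpha>" "\<rho> \<alpha>" by (rule epi_rho[OF a])
  have W': "H.M.V.subspace (lcs (M \<alpha>) k \<inter> lgr (M \<alpha>) p)"
    by (rule H.M.V.subspace_inter[OF H.M.subspace_lcs H.M.subspace_lgr])
  have "\<exists>f. bij_betw f (quot (lgr L p) (lcs_preimage \<alpha> k p)) (quot (lgr (M \<alpha>) p) (lcs (M \<alpha>) k \<inter> lgr (M \<alpha>) p)) \<and>
      (\<forall>x\<in>lgr L p. f (coset x (lcs_preimage \<alpha> k p)) = coset (\<rho> \<alpha> x) (lcs (M \<alpha>) k \<inter> lgr (M \<alpha>) p))"
  proof (rule bij_betw_quot_induced)
    show "0 \<in> lcs_preimage \<alpha> k p" "\<And>u v. \<lbrakk>u \<in> lcs_preimage \<alpha> k p; v \<in> lcs_preimage \<alpha> k p\<rbrakk> \<Longrightarrow> u - v \<in> lcs_preimage \<alpha> k p"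
      using V.subspace_0 V.subspace_diff subspace_lcs_preimage[OF a] by blast+
    show "0 \<in> lcs (M \<alpha>) k \<inter> lgr (M \<alpha>) p"
      "\<And>u v. \<lbrakk>u \<in> lcs (M \<alpha>) k \<inter> lgr (M \<alpha>) p; v \<in> lcs (M \<alpha>) k \<inter> lgr (M \<alpha>) p\<rbrakk> \<Longrightarrow> u - v \<in> lcs (M \<alpha>) k \<inter> lgr (M \<alpha>) p"
      using H.M.V.subspace_0[OF W'] H.M.V.subspace_diff[OF W'] by blast+
    show "\<rho> \<alpha> ` lgr L p = lgr (M \<alpha>) p" by (rule H.map_lgr_surj)
    fix x y assume xy: "x \<in> lgr L p" "y \<in> lgr L p"
    then have "x - y \<in> lgr L p" "\<rho> \<alpha> x - \<rho> \<alpha> y \<in> lgr (M \<alpha>) p" "\<rho> \<alpha> (x - y) = \<rho> \<alpha> x - \<rho> \<alpha> y"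
      using V.subspace_diff[OF subspace_lgr] H.M.V.subspace_diff[OF H.M.subspace_lgr] H.map_lgr
        H.map_diff lgr_subset_car by blast+
    then show "x - y \<in> lcs_preimage \<alpha> k p \<longleftrightarrow> \<rho> \<alpha> x - \<rho> \<alpha> y \<in> lcs (M \<alpha>) k \<inter> lgr (M \<alpha>) p"
      unfolding lcs_preimage_def by simp
  qed
  then show ?thesis using a unfolding W by blast
qed

text \<open>A sequence that is Cauchy for the lower central filtration is eventually constant in each
  nilpotent quotient L_\<alpha>; these eventual values form a compatible family, and its lift is the limit.\<close>

lemma lcs_lgr_limit:
  assumes xs: "\<forall>n. xs n \<in> lgr L p" and cauchy: "\<And>n m. n \<le> m \<Longrightarrow> xs m - xs n \<in> lcs L n"
  shows "\<exists>x\<in>lgr L p. \<forall>n. x - xs n \<in> lcs L n"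
proof -
  have xs_car: "\<forall>n. xs n \<in> car L" using xs lgr_subset_car by blast
  obtain x where x: "x \<in> lgr L p" "\<forall>\<alpha>\<in>A. \<rho> \<alpha> x = \<rho> \<alpha> (xs (nilpotency_index \<alpha>))"
    using compat_family_lift[OF cauchy_limit_compat_family[OF xs cauchy]] by auto
  then have x_car: "x \<in> car L" using lgr_subset_car by blast
  have "x - xs n \<in> lcs L n" for n
  proof (cases "n = 0")
    case True then show ?thesis using x_car xs_car car_diff lcs_0 by blast
  next
    case False
    have "\<rho> \<alpha> (x - xs n) \<in> lcs (M \<alpha>) n" if a: "\<alpha> \<in> A" for \<alpha>
    proof -
      interpret H: graded_lie_epi L "M \<alpha>" "\<rho> \<alpha>" by (rule epi_rho[OF a])
      define m where "m = max n (nilpotency_index \<alpha>)"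
      have "\<rho> \<alpha> (x - xs n) = \<rho> \<alpha> (xs m - xs n)"
        using x(2) a rho_cauchy_stable[OF a xs_car cauchy, of m] H.map_diff x_car xs_car by (simp add: m_def)
      then show ?thesis using cauchy[of n m] H.map_lcs by (force simp: m_def)
    qed
    then have "x - xs n \<in> lcs_closure L A \<rho> n" using lcs_closure_iff x_car xs_car car_diff by blast
    then show ?thesis using lcs_eq_lcs_closure[of n] False by simp
  qed
  then show ?thesis using x(1) by blast
qed

lemma coset_lcs_lgr_eq_iff:
  "coset a (lcs L n \<inter> lgr L p) = coset b (lcs L n \<inter> lgr L p) \<longleftrightarrow> a - b \<in> lcs L n \<inter> lgr L p"
proof (rule coset_eq_iff)
  have W: "V.subspace (lcs L n \<inter> lgr L p)" by (rule V.subspace_inter[OF subspace_lcs subspace_lgr])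
  show "0 \<in> lcs L n \<inter> lgr L p" by (rule V.subspace_0[OF W])
  show "\<And>u v. \<lbrakk>u \<in> lcs L n \<inter> lgr L p; v \<in> lcs L n \<inter> lgr L p\<rbrakk> \<Longrightarrow> u - v \<in> lcs L n \<inter> lgr L p"
    by (rule V.subspace_diff[OF W])
qed

lemma nested_cosets_limit:
  assumes c: "\<forall>n. c n \<in> quot (lgr L p) (lcs L n \<inter> lgr L p) \<and> c (Suc n) \<subseteq> c n"
  shows "\<exists>x\<in>lgr L p. c = (\<lambda>n. coset x (lcs L n \<inter> lgr L p))"
proof -
  have "\<forall>n. \<exists>x. x \<in> lgr L p \<and> c n = coset x (lcs L n \<inter> lgr L p)" using c unfolding quot_def by blast
  from choice[OF this] obtain xs where xs: "\<forall>n. xs n \<in> lgr L p \<and> c n = coset (xs n) (lcs L n \<inter> lgr L p)"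
    by (elim exE) (rule that)
  have c_antimono: "c m \<subseteq> c n" if "n \<le> m" for m n
    using that
  proof (induction m rule: dec_induct)
    case (step m) then show ?case using c by blast
  qed simp
  have "xs m - xs n \<in> lcs L n \<inter> lgr L p" if nm: "n \<le> m" for n m
  proof -
    have "0 \<in> lcs L m \<inter> lgr L p" using V.subspace_0[OF subspace_lcs] by simp
    then have "xs m + 0 \<in> c m" using xs unfolding coset_def by blast
    then have "xs m \<in> coset (xs n) (lcs L n \<inter> lgr L p)" using c_antimono[OF nm] xs by auto
    then show ?thesis unfolding coset_def by auto
  qed
  then obtain x where x: "x \<in> lgr L p" "\<forall>n. x - xs n \<in> lcs L n"
    using lcs_lgr_limit[of xs p] xs by blast
  have "c n = coset x (lcs L n \<inter> lgr L p)" for n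
  proof -
    have "x - xs n \<in> lcs L n \<inter> lgr L p" using x xs V.subspace_diff[OF subspace_lgr] by blast
    then have "coset x (lcs L n \<inter> lgr L p) = coset (xs n) (lcs L n \<inter> lgr L p)"
      using coset_lcs_lgr_eq_iff by blast
    then show ?thesis using xs by simp
  qed
  then show ?thesis using x(1) by blast
qed

theorem pronilpotent: "pronilpotent L"
  unfolding pronilpotent_def
proof
  fix p
  show "bij_betw (\<lambda>x n. coset x (lcs L n \<inter> lgr L p)) (lgr L p)
      {c. \<forall>n. c n \<in> quot (lgr L p) (lcs L n \<inter> lgr L p) \<and> c (Suc n) \<subseteq> c n}"
    unfolding bij_betw_def
  proof (intro conjI inj_onI equalityI subsetI)
    fix x y assume "x \<in> lgr L p" "y \<in> lgr L p"
      and "(\<lambda>n. coset x (lcs L n \<inter> lgr L p)) = (\<lambda>n. coset y (lcs L n \<inter> lgr L p))"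
    then have "\<forall>n. x - y \<in> lcs L n" "x - y \<in> lgr L p"
      using coset_lcs_lgr_eq_iff V.subspace_diff[OF subspace_lgr] by (metis IntD1 fun_cong)+
    then have "x - y = 0" using lgr_Inter_lcs_zero by blast
    then show "x = y" by simp
  next
    fix c assume "c \<in> (\<lambda>x n. coset x (lcs L n \<inter> lgr L p)) ` lgr L p"
    then obtain x where "x \<in> lgr L p" "c = (\<lambda>n. coset x (lcs L n \<inter> lgr L p))" by blast
    moreover have "lcs L (Suc n) \<inter> lgr L p \<subseteq> lcs L n \<inter> lgr L p" for n using lcs_Suc_subset by blast
    ultimately show "c \<in> {c. \<forall>n. c n \<in> quot (lgr L p) (lcs L n \<inter> lgr L p) \<and> c (Suc n) \<subseteq> c n}"
      unfolding quot_def coset_def by blast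
  next
    fix c assume "c \<in> {c. \<forall>n. c n \<in> quot (lgr L p) (lcs L n \<inter> lgr L p) \<and> c (Suc n) \<subseteq> c n}"
    then show "c \<in> (\<lambda>x n. coset x (lcs L n \<inter> lgr L p)) ` lgr L p"
      using nested_cosets_limit by blast
  qed
qed

end

theorem proposition3p1:
  fixes L :: "('a::ab_group_add) glie"
    and A :: "'i set"
    and M :: "'i \<Rightarrow> ('b::ab_group_add) glie"
    and \<rho> :: "'i \<Rightarrow> 'a \<Rightarrow> 'b"
  assumes "complete_enriched L A M \<rho>"
    and "\<forall>p. fin_dim_quot (lsc L) (lgr L p) (lcs_closure L A \<rho> 2 \<inter> lgr L p)"
  shows "(\<forall>p k. \<exists>\<alpha>\<in>A. \<exists>f.
            bij_betw f (quot (lgr L p) (lcs_closure L A \<rho> k \<inter> lgr L p))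
                       (quot (lgr (M \<alpha>) p) (lcs (M \<alpha>) k \<inter> lgr (M \<alpha>) p)) \<and>
            (\<forall>x\<in>lgr L p. f (coset x (lcs_closure L A \<rho> k \<inter> lgr L p))
                          = coset (\<rho> \<alpha> x) (lcs (M \<alpha>) k \<inter> lgr (M \<alpha>) p)))
       \<and> (\<forall>k\<ge>1. lcs L k = lcs_closure L A \<rho> k)
       \<and> pronilpotent L"
proof -
  have "graded_lie L" using assms(1) unfolding complete_enriched_def by (elim conjE)
  then interpret complete_enriched_fin_gen L A M \<rho>
    using assms by unfold_locales
  show ?thesis using quot_lgr_lcs_closure_iso lcs_eq_lcs_closure pronilpotent by blast
qed

end
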